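(* Let $(X_1,Y_1),(X_2,Y_2),\dots$ be a random sample (i.i.d. copies) of a random vector $(X,Y)$ with continuous joint distribution function $H$, marginal distribution functions $F$ and $G$, and (unique) copula $A$. Assume that $A$ allows a continuous Markov kernel $K_A$, define $K_H(x,(-\infty,y]):=K_A(F(x),[0,G(y)])$, and set $N(n):=\lfloor n^s\rfloor$ for some $s\in(0,\tfrac12)$. Let $x\in\mathbb{R}$ be a point in which the regularity assumption holds, i.e. the sequence $(Z_n^{(x)})_{n\in\mathbb{N}}$ is uniformly integrable, where $Z_n^{(x)}$ has distribution function $y\mapsto K_{\mathcal{CB}_{N(n)}(E_n)}(F_n(x),[0,G_n(y)])$. Define $$r_n^+(x):=\int_{(0,\infty)}1-K_{\mathcal{CB}_{N(n)}(E_n)}(F_n(x),[0,G_n(y)])\,d\lambda(y),\qquad r_n^-(x):=\int_{(-\infty,0)}K_{\mathcal{CB}_{N(n)}(E_n)}(F_n(x),[0,G_n(y)])\,d\lambda(y),$$ and $r_n(x):=r_n^+(x)-r_n^-(x)$. Then $r_n(x)\to\mathbb{E}[Y\mid X=x]$ almost surely as $n\to\infty$, where $\mathbb{E}[Y\mid X=x]:=\int_{\mathbb{R}}y\,K_H(x,dy)$.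
   Context: A (bivariate) copula is a distribution function on $[0,1]^2$ with uniform marginals; each copula $B$ corresponds to a doubly stochastic measure $\mu_B$ with $B(x,y)=\mu_B([0,x]\times[0,y])$. A Markov kernel of a copula $B$ is a map $K_B:[0,1]\times\mathcal{B}([0,1])\to[0,1]$, measurable in the first argument, a probability measure in the second, with $\int_{E_1}K_B(x,E_2)\,d\lambda(x)=\mu_B(E_1\times E_2)$ for all Borel $E_1,E_2\subseteq[0,1]$ ($\lambda$ = Lebesgue measure). $A$ allows a continuous Markov kernel if it has a version $K_A$ with $(x,y)\mapsto K_A(x,[0,y])$ continuous on $[0,1]^2$; $K_A$ denotes this version, and $K_H(x,\cdot)$ is the probability measure on $\mathbb{R}$ with the stated distribution function. Checkerboard approximation: $I_1^N=[0,\tfrac1N]$, $I_i^N=(\tfrac{i-1}N,\tfrac iN]$ ($i=2,\dots,N$), $Q_{i,j}^N=I_i^N\times I_j^N$; for a copula $B$, $K_{\mathcal{CB}_N(B)}(u,[0,v])=N^2\sum_{i,j=1}^N\mu_B(Q^N_{i,j})\mathbf 1_{I^N_i}(u)\,\lambda([0,v]\cap I^N_j)$ is the Markov kernel of the absolutely continuous copula $\mathcal{CB}_N(B)$ with density $N^2\sum_{i,j}\mu_B(Q^N_{i,j})\mathbf 1_{Q^N_{i,j}}$. $F_n,G_n$ are the univariate empirical distribution functions of the first $n$ observations; $E_n$ is the empirical copula: with $H_n$ the bivariate empirical distribution function, almost surely there is a unique subcopula $E_n'$ on $\{0,\tfrac1n,\dots,1\}^2$ with $H_n(x,y)=E_n'(F_n(x),G_n(y))$,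 and $E_n$ is its extension to a copula by bilinear interpolation on each square $[\tfrac{i-1}n,\tfrac in]\times[\tfrac{j-1}n,\tfrac jn]$. *)

theory Defs
  imports "HOL-Probability.Probability"
begin

text \<open>A (bivariate) copula, viewed as a function on the unit square (values outside
  [0,1]^2 are irrelevant): grounded, uniform margins, 2-increasing.\<close>
definition copula :: "(real \<Rightarrow> real \<Rightarrow> real) \<Rightarrow> bool" where
  "copula C \<longleftrightarrow>
     (\<forall>u\<in>{0..1}. C u 0 = 0 \<and> C 0 u = 0 \<and> C u 1 = u \<and> C 1 u = u) \<and>
     (\<forall>u1 u2 v1 v2. 0 \<le> u1 \<longrightarrow> u1 \<le> u2 \<longrightarrow> u2 \<le> 1 \<longrightarrow> 0 \<le> v1 \<longrightarrow> v1 \<le> v2 \<longrightarrow> v2 \<le> 1 \<longrightarrow>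
        C u2 v2 - C u1 v2 - C u2 v1 + C u1 v1 \<ge> 0)"

definition doubly_stochastic_measure_of ::
  "(real \<Rightarrow> real \<Rightarrow> real) \<Rightarrow> (real \<times> real) measure \<Rightarrow> bool" where
  "doubly_stochastic_measure_of B \<mu> \<longleftrightarrow>
     sets \<mu> = sets borel \<and> finite_measure \<mu> \<and>
     emeasure \<mu> (UNIV - {0..1} \<times> {0..1}) = 0 \<and>
     (\<forall>x\<in>{0..1}. \<forall>y\<in>{0..1}. measure \<mu> ({0..x} \<times> {0..y}) = B x y)"

definition markov_kernel_of ::
  "(real \<Rightarrow> real \<Rightarrow> real) \<Rightarrow> (real \<Rightarrow> real set \<Rightarrow> real) \<Rightarrow> bool" where
  "markov_kernel_of B K \<longleftrightarrow>
     (\<forall>E\<in>sets (restrict_space borel {0..1::real}).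
        (\<lambda>x. K x E) \<in> borel_measurable (restrict_space borel {0..1::real})) \<and>
     (\<forall>x\<in>{0..1}. \<exists>P. prob_space P \<and> sets P = sets (restrict_space borel {0..1::real}) \<and>
        (\<forall>E\<in>sets P. K x E = measure P E)) \<and>
     (\<exists>\<mu>. doubly_stochastic_measure_of B \<mu> \<and>
        (\<forall>E1\<in>sets (restrict_space borel {0..1::real}). \<forall>E2\<in>sets (restrict_space borel {0..1::real}).
           (LINT x:E1|lborel. K x E2) = measure \<mu> (E1 \<times> E2)))"

definition cb_interval :: "nat \<Rightarrow> nat \<Rightarrow> real set" where
  "cb_interval N i = (if i = 1 then {0..1 / real N} else {(real i - 1) / real N<..real i / real N})"

text \<open>mu_B(Q_{i,j}^N), computed from B (copula measures put no mass on the lines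
  {0} x [0,1] and [0,1] x {0}).\<close>
definition rect_mass :: "(real \<Rightarrow> real \<Rightarrow> real) \<Rightarrow> nat \<Rightarrow> nat \<Rightarrow> nat \<Rightarrow> real" where
  "rect_mass B N i j =
     B (real i / real N) (real j / real N) - B ((real i - 1) / real N) (real j / real N)
     - B (real i / real N) ((real j - 1) / real N) + B ((real i - 1) / real N) ((real j - 1) / real N)"

definition cb_kernel_cdf :: "nat \<Rightarrow> (real \<Rightarrow> real \<Rightarrow> real) \<Rightarrow> real \<Rightarrow> real \<Rightarrow> real" where
  "cb_kernel_cdf N B u v =
     (real N)^2 * (\<Sum>i\<in>{1..N}. \<Sum>j\<in>{1..N}.
        rect_mass B N i j * indicator (cb_interval N i) u * measure lborel ({0..v} \<inter> cb_interval N j))"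

text \<open>Univariate / bivariate empirical distribution functions of the first n observations
  (observations indexed 0,...,n-1).\<close>
definition emp_df :: "(nat \<Rightarrow> 'a \<Rightarrow> real) \<Rightarrow> nat \<Rightarrow> 'a \<Rightarrow> real \<Rightarrow> real" where
  "emp_df Z n \<omega> x = real (card {i. i < n \<and> Z i \<omega> \<le> x}) / real n"

definition emp_joint ::
  "(nat \<Rightarrow> 'a \<Rightarrow> real) \<Rightarrow> (nat \<Rightarrow> 'a \<Rightarrow> real) \<Rightarrow> nat \<Rightarrow> 'a \<Rightarrow> real \<Rightarrow> real \<Rightarrow> real" where
  "emp_joint Xs Ys n \<omega> x y = real (card {i. i < n \<and> Xs i \<omega> \<le> x \<and> Ys i \<omega> \<le> y}) / real n"

text \<open>A subcopula on the grid {0,1/n,...,1}^2, represented by its values S i j at (i/n, j/n)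
  (set to 0 off the grid so that it is determined by its grid values).\<close>
definition grid_subcopula :: "nat \<Rightarrow> (nat \<Rightarrow> nat \<Rightarrow> real) \<Rightarrow> bool" where
  "grid_subcopula n S \<longleftrightarrow>
     (\<forall>i j. n < i \<or> n < j \<longrightarrow> S i j = 0) \<and>
     (\<forall>j\<le>n. S 0 j = 0 \<and> S n j = real j / real n) \<and>
     (\<forall>i\<le>n. S i 0 = 0 \<and> S i n = real i / real n) \<and>
     (\<forall>i<n. \<forall>j<n. S (Suc i) (Suc j) - S i (Suc j) - S (Suc i) j + S i j \<ge> 0)"

text \<open>Empirical subcopula E_n': the (a.s. unique) grid subcopula with
  H_n(x,y) = E_n'(F_n x, G_n y); note F_n x = card{...}/n.\<close>
definition emp_subcopula ::
  "(nat \<Rightarrow> 'a \<Rightarrow> real) \<Rightarrow> (nat \<Rightarrow> 'a \<Rightarrow> real) \<Rightarrow> nat \<Rightarrow> 'a \<Rightarrow> nat \<Rightarrow> nat \<Rightarrow> real" where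
  "emp_subcopula Xs Ys n \<omega> = (THE S. grid_subcopula n S \<and>
     (\<forall>x y. emp_joint Xs Ys n \<omega> x y =
        S (card {i. i < n \<and> Xs i \<omega> \<le> x}) (card {i. i < n \<and> Ys i \<omega> \<le> y})))"

definition grid_bilinear :: "nat \<Rightarrow> (nat \<Rightarrow> nat \<Rightarrow> real) \<Rightarrow> real \<Rightarrow> real \<Rightarrow> real" where
  "grid_bilinear n S u v =
     (let i = min (nat \<lfloor>real n * u\<rfloor>) (n - 1); j = min (nat \<lfloor>real n * v\<rfloor>) (n - 1);
          s = real n * u - real i; t = real n * v - real j
      in (1 - s) * (1 - t) * S i j + s * (1 - t) * S (Suc i) j
         + (1 - s) * t * S i (Suc j) + s * t * S (Suc i) (Suc j))"

definition emp_copula ::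
  "(nat \<Rightarrow> 'a \<Rightarrow> real) \<Rightarrow> (nat \<Rightarrow> 'a \<Rightarrow> real) \<Rightarrow> nat \<Rightarrow> 'a \<Rightarrow> real \<Rightarrow> real \<Rightarrow> real" where
  "emp_copula Xs Ys n \<omega> = grid_bilinear n (emp_subcopula Xs Ys n \<omega>)"

text \<open>Uniform integrability of a sequence of random variables, expressed through their
  distributions mu_n: lim_{c->oo} sup_n E[|Z_n| 1{|Z_n| >= c}] = 0.\<close>
definition unif_integrable_dists :: "(nat \<Rightarrow> real measure) \<Rightarrow> bool" where
  "unif_integrable_dists \<mu> \<longleftrightarrow>
     (\<forall>e>0. \<exists>c. \<forall>n. (\<integral>\<^sup>+ y. indicator {y. c \<le> \<bar>y\<bar>} y * ennreal \<bar>y\<bar> \<partial>\<mu> n) \<le> ennreal e)"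

end

theory Submission
  imports Defs "HOL-Real_Asymp.Real_Asymp"
begin

text \<open>
  By the layer-cake formula, r_n(x) is the mean of the distribution with distribution function
  C_n(y) = K_{CB_N(n)(E_n)}(F_n(x), [0, G_n(y)]), and the claimed limit is the mean of the
  distribution with distribution function y \<mapsto> K_A(F(x), [0, G(y)]). Under uniform
  integrability, pointwise convergence of distribution functions implies convergence of their
  means, so it suffices to show C_n(y) \<rightarrow> K_A(F(x), [0, G(y)]) almost surely.

  Hoeffding's inequality on a grid of quantiles, together with Borel--Cantelli (this is where
  s < 1/2 enters), shows that almost surely H_n, F_n and G_n converge uniformly faster than n^(-s).
  Since copulas are 1-Lipschitz in each variable, N(n) sup |E_n - A| \<rightarrow> 0. Finally the
  checkerboard kernel of B is within 4 N sup |B - A| of that of A, and the checkerboard kernel of A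
  interpolates averages of the continuous kernel K_A over strips of width 1/N.
\<close>

section \<open>Means from distribution functions\<close>

lemma nn_integral_measure_greaterThan:
  assumes nu: "real_distribution \<nu>"
  shows "(\<integral>\<^sup>+ y. indicator {c<..} y * ennreal (measure \<nu> {y<..}) \<partial>lborel)
       = (\<integral>\<^sup>+ z. ennreal (max 0 (z - c)) \<partial>\<nu>)"
proof -
  interpret real_distribution \<nu> by (rule nu)
  interpret pair_sigma_finite \<nu> lborel by unfold_locales
  have sn[measurable_cong]: "sets \<nu> = sets borel" by simp
  have "(\<integral>\<^sup>+ y. indicator {c<..} y * ennreal (measure \<nu> {y<..}) \<partial>lborel)
      = (\<integral>\<^sup>+ y. (\<integral>\<^sup>+ z. indicator {c<..} y * indicator {y<..} z \<partial>\<nu>) \<partial>lborel)"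
    by (intro nn_integral_cong) (simp add: nn_integral_cmult emeasure_eq_measure[symmetric])
  also have "\<dots> = (\<integral>\<^sup>+ z. (\<integral>\<^sup>+ y. indicator {c<..} y * indicator {y<..} z \<partial>lborel) \<partial>\<nu>)"
  proof (rule Fubini')
    have "Measurable.pred (borel \<Otimes>\<^sub>M borel) (\<lambda>p::real \<times> real. c < snd p \<and> snd p < fst p)"
      by measurable
    then have "(\<lambda>p. indicator {p::real \<times> real. c < snd p \<and> snd p < fst p} p :: ennreal)
        \<in> borel_measurable (\<nu> \<Otimes>\<^sub>M lborel)"
      by (simp add: pred_def space_pair_measure sets_pair_measure_cong[OF sn sets_lborel])
    moreover have "(\<lambda>(z, y). indicator {c<..} y * indicator {y<..} z :: ennreal)
        = (\<lambda>p. indicator {p::real \<times> real. c < snd p \<and> snd p < fst p} p)"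
      by (auto simp: indicator_def fun_eq_iff)
    ultimately show "(\<lambda>(z, y). indicator {c<..} y * indicator {y<..} z :: ennreal)
        \<in> borel_measurable (\<nu> \<Otimes>\<^sub>M lborel)"
      by simp
  qed
  also have "\<dots> = (\<integral>\<^sup>+ z. ennreal (max 0 (z - c)) \<partial>\<nu>)"
  proof (intro nn_integral_cong)
    fix z :: real
    have "(\<integral>\<^sup>+ y. indicator {c<..} y * indicator {y<..} z \<partial>lborel) = (\<integral>\<^sup>+ y. indicator {c<..<z} y \<partial>lborel)"
      by (intro nn_integral_cong) (auto simp: indicator_def)
    then show "(\<integral>\<^sup>+ y. indicator {c<..} y * indicator {y<..} z \<partial>lborel) = ennreal (max 0 (z - c))"
      by (cases "c \<le> z") auto
  qed
  finally show ?thesis .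
qed

lemma nn_integral_measure_atMost:
  assumes nu: "real_distribution \<nu>"
  shows "(\<integral>\<^sup>+ y. indicator {..<c} y * ennreal (measure \<nu> {..y}) \<partial>lborel)
       = (\<integral>\<^sup>+ z. ennreal (max 0 (c - z)) \<partial>\<nu>)"
proof -
  interpret real_distribution \<nu> by (rule nu)
  interpret pair_sigma_finite \<nu> lborel by unfold_locales
  have sn[measurable_cong]: "sets \<nu> = sets borel" by simp
  have "(\<integral>\<^sup>+ y. indicator {..<c} y * ennreal (measure \<nu> {..y}) \<partial>lborel)
      = (\<integral>\<^sup>+ y. (\<integral>\<^sup>+ z. indicator {..<c} y * indicator {..y} z \<partial>\<nu>) \<partial>lborel)"
    by (intro nn_integral_cong) (simp add: nn_integral_cmult emeasure_eq_measure[symmetric])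
  also have "\<dots> = (\<integral>\<^sup>+ z. (\<integral>\<^sup>+ y. indicator {..<c} y * indicator {..y} z \<partial>lborel) \<partial>\<nu>)"
  proof (rule Fubini')
    have "Measurable.pred (borel \<Otimes>\<^sub>M borel) (\<lambda>p::real \<times> real. snd p < c \<and> fst p \<le> snd p)"
      by measurable
    then have "(\<lambda>p. indicator {p::real \<times> real. snd p < c \<and> fst p \<le> snd p} p :: ennreal)
        \<in> borel_measurable (\<nu> \<Otimes>\<^sub>M lborel)"
      by (simp add: pred_def space_pair_measure sets_pair_measure_cong[OF sn sets_lborel])
    moreover have "(\<lambda>(z, y). indicator {..<c} y * indicator {..y} z :: ennreal)
        = (\<lambda>p. indicator {p::real \<times> real. snd p < c \<and> fst p \<le> snd p} p)"
      by (auto simp: indicator_def fun_eq_iff)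
    ultimately show "(\<lambda>(z, y). indicator {..<c} y * indicator {..y} z :: ennreal)
        \<in> borel_measurable (\<nu> \<Otimes>\<^sub>M lborel)"
      by simp
  qed
  also have "\<dots> = (\<integral>\<^sup>+ z. ennreal (max 0 (c - z)) \<partial>\<nu>)"
  proof (intro nn_integral_cong)
    fix z :: real
    have "(\<integral>\<^sup>+ y. indicator {..<c} y * indicator {..y} z \<partial>lborel) = (\<integral>\<^sup>+ y. indicator {z..<c} y \<partial>lborel)"
      by (intro nn_integral_cong) (auto simp: indicator_def)
    then show "(\<integral>\<^sup>+ y. indicator {..<c} y * indicator {..y} z \<partial>lborel) = ennreal (max 0 (c - z))"
      by (cases "z \<le> c") auto
  qed
  finally show ?thesis .
qed

lemma (in real_distribution) measure_greaterThan_eq_cdf: "measure M {y<..} = 1 - cdf M y"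
proof -
  have "{y<..} = space M - {..y}" by auto
  then show ?thesis using prob_compl[of "{..y}"] by (simp add: cdf_def)
qed

lemma set_lebesgue_integral_eq_nn_integral:
  fixes f :: "real \<Rightarrow> real"
  assumes "S \<in> sets borel" and "f \<in> borel_measurable borel" and "\<And>y. y \<in> S \<Longrightarrow> 0 \<le> f y"
  shows "(LINT y:S|lborel. f y) = enn2real (\<integral>\<^sup>+ y. indicator S y * ennreal (f y) \<partial>lborel)"
proof -
  have "enn2real (\<integral>\<^sup>+ y. indicator S y * ennreal (f y) \<partial>lborel) = (\<integral> y. indicator S y *\<^sub>R f y \<partial>lborel)"
    by (rule enn2real_nn_integral_eq_integral) (use assms in \<open>auto simp: indicator_def\<close>)
  then show ?thesis by (simp add: set_lebesgue_integral_def)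
qed

lemma expectation_eq_cdf_integrals:
  assumes nu: "real_distribution \<nu>"
    and pos: "(\<integral>\<^sup>+ y. indicator {0<..} y * ennreal (1 - cdf \<nu> y) \<partial>lborel) < \<infinity>"
    and neg: "(\<integral>\<^sup>+ y. indicator {..<0} y * ennreal (cdf \<nu> y) \<partial>lborel) < \<infinity>"
  shows "integrable \<nu> (\<lambda>z. z)"
    and "(\<integral>z. z \<partial>\<nu>) = (LINT y:{0<..}|lborel. 1 - cdf \<nu> y) - (LINT y:{..<0}|lborel. cdf \<nu> y)"
proof -
  interpret real_distribution \<nu> by (rule nu)
  have L1: "(\<integral>\<^sup>+ y. indicator {0<..} y * ennreal (1 - cdf \<nu> y) \<partial>lborel) = (\<integral>\<^sup>+ z. ennreal (max 0 z) \<partial>\<nu>)"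
    using nn_integral_measure_greaterThan[OF nu, of 0] by (simp add: measure_greaterThan_eq_cdf)
  have L2: "(\<integral>\<^sup>+ y. indicator {..<0} y * ennreal (cdf \<nu> y) \<partial>lborel) = (\<integral>\<^sup>+ z. ennreal (max 0 (- z)) \<partial>\<nu>)"
    using nn_integral_measure_atMost[OF nu, of 0] by (simp add: cdf_def)
  have "(\<integral>\<^sup>+ z. ennreal (norm z) \<partial>\<nu>) = (\<integral>\<^sup>+ z. ennreal (max 0 z) + ennreal (max 0 (- z)) \<partial>\<nu>)"
    by (intro nn_integral_cong) (auto simp: max_def)
  also have "\<dots> = (\<integral>\<^sup>+ z. ennreal (max 0 z) \<partial>\<nu>) + (\<integral>\<^sup>+ z. ennreal (max 0 (- z)) \<partial>\<nu>)"
    by (intro nn_integral_add) auto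
  also have "\<dots> < \<infinity>" using pos neg unfolding L1 L2 by simp
  finally show int: "integrable \<nu> (\<lambda>z. z)" by (intro integrableI_bounded) auto
  have "(\<integral>z. z \<partial>\<nu>) = enn2real (\<integral>\<^sup>+ z. ennreal z \<partial>\<nu>) - enn2real (\<integral>\<^sup>+ z. ennreal (- z) \<partial>\<nu>)"
    by (rule real_lebesgue_integral_def[OF int])
  also have "\<dots> = enn2real (\<integral>\<^sup>+ y. indicator {0<..} y * ennreal (1 - cdf \<nu> y) \<partial>lborel)
      - enn2real (\<integral>\<^sup>+ y. indicator {..<0} y * ennreal (cdf \<nu> y) \<partial>lborel)"
    unfolding L1 L2 by (simp add: ennreal_max_0)
  also have "\<dots> = (LINT y:{0<..}|lborel. 1 - cdf \<nu> y) - (LINT y:{..<0}|lborel. cdf \<nu> y)"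
  proof -
    have "cdf \<nu> \<in> borel_measurable borel"
      by (intro borel_measurable_mono) (simp add: mono_def cdf_nondecreasing)
    then show ?thesis
      by (simp add: set_lebesgue_integral_eq_nn_integral cdf_bounded_prob cdf_nonneg)
  qed
  finally show "(\<integral>z. z \<partial>\<nu>) = (LINT y:{0<..}|lborel. 1 - cdf \<nu> y) - (LINT y:{..<0}|lborel. cdf \<nu> y)" .
qed

definition distribution_function :: "(real \<Rightarrow> real) \<Rightarrow> bool" where
  "distribution_function F \<longleftrightarrow>
     mono F \<and> (\<forall>a. continuous (at_right a) F) \<and> (F \<longlongrightarrow> 0) at_bot \<and> (F \<longlongrightarrow> 1) at_top"

lemma distribution_functionD:
  assumes "distribution_function F"
  shows distribution_function_real_distribution: "real_distribution (interval_measure F)"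
    and distribution_function_cdf: "cdf (interval_measure F) = F"
    and distribution_function_borel: "F \<in> borel_measurable borel"
    and distribution_function_bounds: "0 \<le> F y" "F y \<le> 1"
proof -
  have mono: "\<And>x y. x \<le> y \<Longrightarrow> F x \<le> F y" using assms by (simp add: distribution_function_def mono_def)
  show rd: "real_distribution (interval_measure F)" and cd: "cdf (interval_measure F) = F"
    using assms real_distribution_interval_measure[OF mono] cdf_interval_measure[OF mono]
    by (auto simp: distribution_function_def)
  show "F \<in> borel_measurable borel" by (rule borel_measurable_mono) (simp add: mono_def mono)
  interpret real_distribution "interval_measure F" by (rule rd)
  show "0 \<le> F y" "F y \<le> 1" using cdf_nonneg[of y] cdf_bounded_prob[of y] by (simp_all add: cd)
qed

lemma nn_integral_split_tail:
  fixes f :: "real \<Rightarrow> real"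
  assumes S: "S \<in> sets borel" and f: "f \<in> borel_measurable borel" and f01: "\<And>y. 0 \<le> f y \<and> f y \<le> 1"
  shows "(\<integral>\<^sup>+ y. indicator S y * ennreal (f y) \<partial>lborel) =
    ennreal (LINT y:S \<inter> {y. \<bar>y\<bar> \<le> c}|lborel. f y) + (\<integral>\<^sup>+ y. indicator (S \<inter> {y. c < \<bar>y\<bar>}) y * ennreal (f y) \<partial>lborel)"
proof -
  let ?B = "S \<inter> {y. \<bar>y\<bar> \<le> c}" and ?T = "S \<inter> {y. c < \<bar>y\<bar>}"
  have B: "?B \<in> sets borel" and T: "?T \<in> sets borel" using S by measurable
  have "emeasure lborel ?B \<le> emeasure lborel {-\<bar>c\<bar>..\<bar>c\<bar>}" by (intro emeasure_mono) auto
  then have "emeasure lborel ?B < \<infinity>" by (simp add: le_less_trans)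
  then have "integrable lborel (indicator ?B :: real \<Rightarrow> real)" using B by (simp add: integrable_real_indicator)
  then have int: "integrable lborel (\<lambda>y. indicator ?B y * f y)"
    by (rule Bochner_Integration.integrable_bound) (use S f f01 in \<open>auto simp: indicator_def\<close>)
  have "(\<integral>\<^sup>+ y. indicator S y * ennreal (f y) \<partial>lborel) =
      (\<integral>\<^sup>+ y. ennreal (indicator ?B y * f y) + indicator ?T y * ennreal (f y) \<partial>lborel)"
    by (intro nn_integral_cong) (auto simp: indicator_def)
  also have "\<dots> = (\<integral>\<^sup>+ y. ennreal (indicator ?B y * f y) \<partial>lborel) + (\<integral>\<^sup>+ y. indicator ?T y * ennreal (f y) \<partial>lborel)"
    using B T f by (intro nn_integral_add) auto
  also have "(\<integral>\<^sup>+ y. ennreal (indicator ?B y * f y) \<partial>lborel) = ennreal (LINT y:?B|lborel. f y)"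
    using nn_integral_eq_integral[OF int] f01 by (simp add: set_lebesgue_integral_def)
  finally show ?thesis .
qed

lemma enn2real_nn_integral_split_tail:
  fixes f :: "real \<Rightarrow> real"
  assumes S: "S \<in> sets borel" and f: "f \<in> borel_measurable borel" and f01: "\<And>y. 0 \<le> f y \<and> f y \<le> 1"
    and tail: "(\<integral>\<^sup>+ y. indicator (S \<inter> {y. c < \<bar>y\<bar>}) y * ennreal (f y) \<partial>lborel) \<le> ennreal e" and e: "0 \<le> e"
  shows "\<bar>enn2real (\<integral>\<^sup>+ y. indicator S y * ennreal (f y) \<partial>lborel) - (LINT y:S \<inter> {y. \<bar>y\<bar> \<le> c}|lborel. f y)\<bar> \<le> e"
proof -
  define T where "T = (\<integral>\<^sup>+ y. indicator (S \<inter> {y. c < \<bar>y\<bar>}) y * ennreal (f y) \<partial>lborel)"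
  have fin: "T < \<infinity>" using tail unfolding T_def by (simp add: le_less_trans)
  have "0 \<le> (LINT y:S \<inter> {y. \<bar>y\<bar> \<le> c}|lborel. f y)"
    unfolding set_lebesgue_integral_def using f01 by (intro integral_nonneg_AE) (auto simp: indicator_def)
  then have "enn2real (\<integral>\<^sup>+ y. indicator S y * ennreal (f y) \<partial>lborel) = (LINT y:S \<inter> {y. \<bar>y\<bar> \<le> c}|lborel. f y) + enn2real T"
    unfolding nn_integral_split_tail[OF S f f01, of c] T_def[symmetric] using fin by (simp add: enn2real_plus)
  moreover have "enn2real T \<le> e" using enn2real_mono[OF tail[folded T_def]] e by simp
  ultimately show ?thesis by simp
qed

lemma nn_integral_tail_le_of_tendsto:
  fixes g :: "nat \<Rightarrow> real \<Rightarrow> real"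
  assumes T: "T \<in> sets borel" and meas: "\<And>n. g n \<in> borel_measurable borel"
    and lim: "\<And>y. (\<lambda>n. g n y) \<longlonglongrightarrow> h y"
    and le: "\<And>n. (\<integral>\<^sup>+ y. indicator T y * ennreal (g n y) \<partial>lborel) \<le> e"
  shows "(\<integral>\<^sup>+ y. indicator T y * ennreal (h y) \<partial>lborel) \<le> e"
proof -
  have "(\<integral>\<^sup>+ y. indicator T y * ennreal (h y) \<partial>lborel) = (\<integral>\<^sup>+ y. liminf (\<lambda>n. indicator T y * ennreal (g n y)) \<partial>lborel)"
  proof (intro nn_integral_cong)
    fix y :: real
    have "(\<lambda>n. ennreal (indicator T y * g n y)) \<longlonglongrightarrow> ennreal (indicator T y * h y)"
      by (intro tendsto_intros tendsto_ennrealI lim)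
    moreover have "\<And>x. ennreal (indicator T y * x) = indicator T y * ennreal x"
      by (simp add: indicator_def)
    ultimately have "(\<lambda>n. indicator T y * ennreal (g n y)) \<longlonglongrightarrow> indicator T y * ennreal (h y)"
      by simp
    then show "indicator T y * ennreal (h y) = liminf (\<lambda>n. indicator T y * ennreal (g n y))"
      by (simp add: lim_imp_Liminf)
  qed
  also have "\<dots> \<le> liminf (\<lambda>n. \<integral>\<^sup>+ y. indicator T y * ennreal (g n y) \<partial>lborel)"
    by (rule nn_integral_liminf) (use T meas in measurable)
  also have "\<dots> \<le> e" by (rule Liminf_le) (use le in auto)
  finally show ?thesis .
qed

lemma set_integral_tendsto_bounded_part:
  fixes g :: "nat \<Rightarrow> real \<Rightarrow> real"
  assumes S: "S \<in> sets borel" and meas: "\<And>n. g n \<in> borel_measurable borel"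
    and g01: "\<And>n y. 0 \<le> g n y \<and> g n y \<le> 1" and lim: "\<And>y. (\<lambda>n. g n y) \<longlonglongrightarrow> h y"
  shows "(\<lambda>n. LINT y:S \<inter> {y. \<bar>y\<bar> \<le> c}|lborel. g n y) \<longlonglongrightarrow> (LINT y:S \<inter> {y. \<bar>y\<bar> \<le> c}|lborel. h y)"
  unfolding set_lebesgue_integral_def
proof (rule integral_dominated_convergence[where w = "indicator (S \<inter> {y. \<bar>y\<bar> \<le> c})"])
  let ?B = "S \<inter> {y. \<bar>y\<bar> \<le> c}"
  have B: "?B \<in> sets borel" using S by measurable
  have "emeasure lborel ?B \<le> emeasure lborel {-\<bar>c\<bar>..\<bar>c\<bar>}" by (intro emeasure_mono) auto
  then show "integrable lborel (indicator ?B :: real \<Rightarrow> real)"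
    using B by (simp add: integrable_real_indicator le_less_trans)
  show "AE y in lborel. (\<lambda>n. indicator ?B y *\<^sub>R g n y) \<longlonglongrightarrow> indicator ?B y *\<^sub>R h y"
    by (intro AE_I2 tendsto_intros lim)
  show "AE y in lborel. norm (indicator ?B y *\<^sub>R g n y) \<le> indicator ?B y" for n
    using g01[of n] by (intro AE_I2) (simp add: indicator_def)
  show "(\<lambda>y. indicator ?B y *\<^sub>R h y) \<in> borel_measurable lborel"
    using B borel_measurable_LIMSEQ_real[OF lim meas] by simp
  show "(\<lambda>y. indicator ?B y *\<^sub>R g n y) \<in> borel_measurable lborel" for n
    using B meas[of n] by simp
qed

lemma nn_integral_tendsto_of_uniform_tails:
  fixes g :: "nat \<Rightarrow> real \<Rightarrow> real"
  assumes S: "S \<in> sets borel" and meas: "\<And>n. g n \<in> borel_measurable borel"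
    and g01: "\<And>n y. 0 \<le> g n y \<and> g n y \<le> 1" and lim: "\<And>y. (\<lambda>n. g n y) \<longlonglongrightarrow> h y"
    and tails: "\<And>e. e > 0 \<Longrightarrow> \<exists>c. \<forall>n.
      (\<integral>\<^sup>+ y. indicator (S \<inter> {y. c < \<bar>y\<bar>}) y * ennreal (g n y) \<partial>lborel) \<le> ennreal e"
  shows "(\<integral>\<^sup>+ y. indicator S y * ennreal (h y) \<partial>lborel) < \<infinity>"
    and "(\<lambda>n. enn2real (\<integral>\<^sup>+ y. indicator S y * ennreal (g n y) \<partial>lborel))
           \<longlonglongrightarrow> enn2real (\<integral>\<^sup>+ y. indicator S y * ennreal (h y) \<partial>lborel)"
proof -
  have hm: "h \<in> borel_measurable borel" by (rule borel_measurable_LIMSEQ_real[OF lim meas])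
  have h01: "0 \<le> h y \<and> h y \<le> 1" for y
    using tendsto_lowerbound[OF lim always_eventually] tendsto_upperbound[OF lim always_eventually] g01
    by auto
  have tail_h: "(\<integral>\<^sup>+ y. indicator (S \<inter> {y. c < \<bar>y\<bar>}) y * ennreal (h y) \<partial>lborel) \<le> ennreal e"
    if "\<And>n. (\<integral>\<^sup>+ y. indicator (S \<inter> {y. c < \<bar>y\<bar>}) y * ennreal (g n y) \<partial>lborel) \<le> ennreal e" for c e
    by (rule nn_integral_tail_le_of_tendsto[OF _ meas lim that]) (use S in measurable)
  show "(\<integral>\<^sup>+ y. indicator S y * ennreal (h y) \<partial>lborel) < \<infinity>"
  proof -
    obtain c where "\<And>n. (\<integral>\<^sup>+ y. indicator (S \<inter> {y. c < \<bar>y\<bar>}) y * ennreal (g n y) \<partial>lborel) \<le> ennreal 1"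
      using tails[of 1] by auto
    then have "(\<integral>\<^sup>+ y. indicator (S \<inter> {y. c < \<bar>y\<bar>}) y * ennreal (h y) \<partial>lborel) < \<infinity>"
      using tail_h[of c 1] by (simp add: le_less_trans)
    then show ?thesis unfolding nn_integral_split_tail[OF S hm h01, of c] by simp
  qed
  show "(\<lambda>n. enn2real (\<integral>\<^sup>+ y. indicator S y * ennreal (g n y) \<partial>lborel))
      \<longlonglongrightarrow> enn2real (\<integral>\<^sup>+ y. indicator S y * ennreal (h y) \<partial>lborel)"
  proof (rule tendstoI)
    fix e :: real assume e: "e > 0"
    obtain c where c: "\<And>n. (\<integral>\<^sup>+ y. indicator (S \<inter> {y. c < \<bar>y\<bar>}) y * ennreal (g n y) \<partial>lborel) \<le> ennreal (e/3)"
      using tails[of "e/3"] e by auto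
    have near_h: "\<bar>enn2real (\<integral>\<^sup>+ y. indicator S y * ennreal (h y) \<partial>lborel) - (LINT y:S \<inter> {y. \<bar>y\<bar> \<le> c}|lborel. h y)\<bar> \<le> e/3"
      by (rule enn2real_nn_integral_split_tail[OF S hm h01 tail_h[OF c]]) (use e in simp)
    have "\<forall>\<^sub>F n in sequentially.
        dist (LINT y:S \<inter> {y. \<bar>y\<bar> \<le> c}|lborel. g n y) (LINT y:S \<inter> {y. \<bar>y\<bar> \<le> c}|lborel. h y) < e/3"
      using tendstoD[OF set_integral_tendsto_bounded_part[OF S meas g01 lim, of c], of "e/3"] e by simp
    then show "\<forall>\<^sub>F n in sequentially. dist (enn2real (\<integral>\<^sup>+ y. indicator S y * ennreal (g n y) \<partial>lborel))
        (enn2real (\<integral>\<^sup>+ y. indicator S y * ennreal (h y) \<partial>lborel)) < e"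
    proof eventually_elim
      case (elim n)
      have "\<bar>enn2real (\<integral>\<^sup>+ y. indicator S y * ennreal (g n y) \<partial>lborel) - (LINT y:S \<inter> {y. \<bar>y\<bar> \<le> c}|lborel. g n y)\<bar> \<le> e/3"
        by (rule enn2real_nn_integral_split_tail[OF S meas g01 c]) (use e in simp)
      then show ?case using elim near_h unfolding dist_real_def by linarith
    qed
  qed
qed

lemma nn_integral_upper_tail_le:
  assumes nu: "real_distribution \<nu>" and c: "c0 \<le> c" "0 \<le> c"
  shows "(\<integral>\<^sup>+ y. indicator ({0<..} \<inter> {y. c < \<bar>y\<bar>}) y * ennreal (1 - cdf \<nu> y) \<partial>lborel)
      \<le> (\<integral>\<^sup>+ y. indicator {y. c0 \<le> \<bar>y\<bar>} y * ennreal \<bar>y\<bar> \<partial>\<nu>)"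
proof -
  interpret real_distribution \<nu> by (rule nu)
  have "(\<integral>\<^sup>+ y. indicator ({0<..} \<inter> {y. c < \<bar>y\<bar>}) y * ennreal (1 - cdf \<nu> y) \<partial>lborel)
      = (\<integral>\<^sup>+ y. indicator {c<..} y * ennreal (measure \<nu> {y<..}) \<partial>lborel)"
    using c by (intro nn_integral_cong) (auto simp: indicator_def measure_greaterThan_eq_cdf)
  also have "\<dots> = (\<integral>\<^sup>+ z. ennreal (max 0 (z - c)) \<partial>\<nu>)" by (rule nn_integral_measure_greaterThan[OF nu])
  also have "\<dots> \<le> (\<integral>\<^sup>+ y. indicator {y. c0 \<le> \<bar>y\<bar>} y * ennreal \<bar>y\<bar> \<partial>\<nu>)"
    using c by (intro nn_integral_mono) (auto simp: indicator_def max_def)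
  finally show ?thesis .
qed

lemma nn_integral_lower_tail_le:
  assumes nu: "real_distribution \<nu>" and c: "c0 \<le> c" "0 \<le> c"
  shows "(\<integral>\<^sup>+ y. indicator ({..<0} \<inter> {y. c < \<bar>y\<bar>}) y * ennreal (cdf \<nu> y) \<partial>lborel)
      \<le> (\<integral>\<^sup>+ y. indicator {y. c0 \<le> \<bar>y\<bar>} y * ennreal \<bar>y\<bar> \<partial>\<nu>)"
proof -
  have "(\<integral>\<^sup>+ y. indicator ({..<0} \<inter> {y. c < \<bar>y\<bar>}) y * ennreal (cdf \<nu> y) \<partial>lborel)
      = (\<integral>\<^sup>+ y. indicator {..<-c} y * ennreal (measure \<nu> {..y}) \<partial>lborel)"
    using c by (intro nn_integral_cong) (auto simp: indicator_def cdf_def)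
  also have "\<dots> = (\<integral>\<^sup>+ z. ennreal (max 0 (-c - z)) \<partial>\<nu>)" by (rule nn_integral_measure_atMost[OF nu])
  also have "\<dots> \<le> (\<integral>\<^sup>+ y. indicator {y. c0 \<le> \<bar>y\<bar>} y * ennreal \<bar>y\<bar> \<partial>\<nu>)"
    using c by (intro nn_integral_mono) (auto simp: indicator_def max_def)
  finally show ?thesis .
qed

lemma measure_abs_ge_le_nn_integral:
  assumes nu: "real_distribution \<nu>" and c: "1 \<le> c" "c0 \<le> c"
  shows "ennreal (measure \<nu> {z. c \<le> \<bar>z\<bar>}) \<le> (\<integral>\<^sup>+ y. indicator {y. c0 \<le> \<bar>y\<bar>} y * ennreal \<bar>y\<bar> \<partial>\<nu>)"
proof -
  interpret real_distribution \<nu> by (rule nu)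
  have "ennreal (measure \<nu> {z. c \<le> \<bar>z\<bar>}) = (\<integral>\<^sup>+ y. indicator {z. c \<le> \<bar>z\<bar>} y \<partial>\<nu>)"
    by (simp add: emeasure_eq_measure[symmetric])
  also have "\<dots> \<le> (\<integral>\<^sup>+ y. indicator {y. c0 \<le> \<bar>y\<bar>} y * ennreal \<bar>y\<bar> \<partial>\<nu>)"
    using c by (intro nn_integral_mono) (auto simp: indicator_def)
  finally show ?thesis .
qed

lemma unif_integrable_dists_tight:
  assumes df: "\<And>n. distribution_function (C n)"
    and UI: "unif_integrable_dists (\<lambda>n. interval_measure (C n))" and e: "e > 0"
  obtains c where "\<And>n y. y \<le> -c \<Longrightarrow> C n y \<le> e" and "\<And>n y. c \<le> y \<Longrightarrow> 1 - C n y \<le> e"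
proof -
  obtain c0 where c0: "\<And>n. (\<integral>\<^sup>+ y. indicator {y. c0 \<le> \<bar>y\<bar>} y * ennreal \<bar>y\<bar> \<partial>interval_measure (C n)) \<le> ennreal e"
    using UI e unfolding unif_integrable_dists_def by blast
  define c where "c = max c0 1"
  have tight: "measure (interval_measure (C n)) {z. c \<le> \<bar>z\<bar>} \<le> e" for n
    using order_trans[OF measure_abs_ge_le_nn_integral[OF distribution_function_real_distribution[OF df], of c c0] c0]
      e unfolding c_def by (simp add: ennreal_le_iff2)
  show ?thesis
  proof
    fix n y assume "y \<le> -c"
    interpret real_distribution "interval_measure (C n)" by (rule distribution_function_real_distribution[OF df])
    have "C n y = measure (interval_measure (C n)) {..y}"
      using distribution_function_cdf[OF df, of n] unfolding cdf_def by metis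
    also have "\<dots> \<le> measure (interval_measure (C n)) {z. c \<le> \<bar>z\<bar>}"
      using \<open>y \<le> -c\<close> by (intro finite_measure_mono) auto
    finally show "C n y \<le> e" using tight[of n] by simp
  next
    fix n y assume "c \<le> y"
    interpret real_distribution "interval_measure (C n)" by (rule distribution_function_real_distribution[OF df])
    have "1 - C n y = measure (interval_measure (C n)) {y<..}"
      by (simp add: measure_greaterThan_eq_cdf distribution_function_cdf[OF df])
    also have "\<dots> \<le> measure (interval_measure (C n)) {z. c \<le> \<bar>z\<bar>}"
      using \<open>c \<le> y\<close> by (intro finite_measure_mono) auto
    finally show "1 - C n y \<le> e" using tight[of n] by simp
  qed
qed

lemma unif_integrable_dists_tails:
  assumes df: "\<And>n. distribution_function (C n)"
    and UI: "unif_integrable_dists (\<lambda>n. interval_measure (C n))" and e: "e > 0"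
  shows "\<exists>c. \<forall>n. (\<integral>\<^sup>+ y. indicator ({0<..} \<inter> {y. c < \<bar>y\<bar>}) y * ennreal (1 - C n y) \<partial>lborel) \<le> ennreal e"
    and "\<exists>c. \<forall>n. (\<integral>\<^sup>+ y. indicator ({..<0} \<inter> {y. c < \<bar>y\<bar>}) y * ennreal (C n y) \<partial>lborel) \<le> ennreal e"
proof -
  note rd = distribution_function_real_distribution[OF df]
  note cd = distribution_function_cdf[OF df]
  obtain c0 where c0: "\<And>n. (\<integral>\<^sup>+ y. indicator {y. c0 \<le> \<bar>y\<bar>} y * ennreal \<bar>y\<bar> \<partial>interval_measure (C n)) \<le> ennreal e"
    using UI e unfolding unif_integrable_dists_def by blast
  show "\<exists>c. \<forall>n. (\<integral>\<^sup>+ y. indicator ({0<..} \<inter> {y. c < \<bar>y\<bar>}) y * ennreal (1 - C n y) \<partial>lborel) \<le> ennreal e"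
    using order_trans[OF nn_integral_upper_tail_le[OF rd, of c0 "max c0 1"] c0] cd by (intro exI[of _ "max c0 1"]) auto
  show "\<exists>c. \<forall>n. (\<integral>\<^sup>+ y. indicator ({..<0} \<inter> {y. c < \<bar>y\<bar>}) y * ennreal (C n y) \<partial>lborel) \<le> ennreal e"
    using order_trans[OF nn_integral_lower_tail_le[OF rd, of c0 "max c0 1"] c0] cd by (intro exI[of _ "max c0 1"]) auto
qed

lemma distribution_function_limit:
  assumes df: "\<And>n. distribution_function (C n)"
    and conv: "\<And>y. (\<lambda>n. C n y) \<longlonglongrightarrow> \<Phi> y" and rc: "\<And>a. continuous (at_right a) \<Phi>"
    and UI: "unif_integrable_dists (\<lambda>n. interval_measure (C n))"
  shows "distribution_function \<Phi>"
proof -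
  have \<Phi>01: "0 \<le> \<Phi> y" "\<Phi> y \<le> 1" for y
    using tendsto_lowerbound[OF conv always_eventually] tendsto_upperbound[OF conv always_eventually]
      distribution_function_bounds[OF df] by auto
  have "mono \<Phi>"
    unfolding mono_def using df
    by (intro allI impI LIMSEQ_le[OF conv conv]) (auto simp: distribution_function_def mono_def)
  moreover have "(\<Phi> \<longlongrightarrow> 0) at_bot"
  proof (rule order_tendstoI)
    fix a :: real assume "a < 0" then show "\<forall>\<^sub>F y in at_bot. a < \<Phi> y"
      using \<Phi>01 by (auto intro: always_eventually less_le_trans)
  next
    fix a :: real assume a: "0 < a"
    obtain c where c: "\<And>n y. y \<le> -c \<Longrightarrow> C n y \<le> a/2"
      by (rule unif_integrable_dists_tight[OF df UI, of "a/2"]) (use a in auto)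
    have "\<Phi> y \<le> a/2" if "y \<le> -c" for y
      using c[OF that] by (intro LIMSEQ_le_const2[OF conv]) auto
    then show "\<forall>\<^sub>F y in at_bot. \<Phi> y < a"
      unfolding eventually_at_bot_linorder using a by (intro exI[of _ "-c"]) force
  qed
  moreover have "(\<Phi> \<longlongrightarrow> 1) at_top"
  proof (rule order_tendstoI)
    fix a :: real assume "1 < a" then show "\<forall>\<^sub>F y in at_top. \<Phi> y < a"
      using \<Phi>01 by (auto intro: always_eventually le_less_trans)
  next
    fix a :: real assume a: "a < 1"
    obtain c where c: "\<And>n y. c \<le> y \<Longrightarrow> 1 - C n y \<le> (1 - a)/2"
      by (rule unif_integrable_dists_tight[OF df UI, of "(1 - a)/2"]) (use a in auto)
    have "1 - \<Phi> y \<le> (1 - a)/2" if "c \<le> y" for y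
      using c[OF that] by (intro LIMSEQ_le_const2[OF tendsto_diff[OF tendsto_const conv]]) auto
    then show "\<forall>\<^sub>F y in at_top. a < \<Phi> y"
      unfolding eventually_at_top_linorder using a by (intro exI[of _ c]) force
  qed
  ultimately show ?thesis using rc by (simp add: distribution_function_def)
qed

lemma mean_tendsto_of_cdf_tendsto:
  assumes df: "\<And>n. distribution_function (C n)"
    and conv: "\<And>y. (\<lambda>n. C n y) \<longlonglongrightarrow> \<Phi> y" and rc: "\<And>a. continuous (at_right a) \<Phi>"
    and UI: "unif_integrable_dists (\<lambda>n. interval_measure (C n))"
  shows "(\<lambda>n. (LINT y:{0<..}|lborel. 1 - C n y) - (LINT y:{..<0}|lborel. C n y))
           \<longlonglongrightarrow> (\<integral>y. y \<partial>interval_measure \<Phi>)"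
proof -
  have df\<Phi>: "distribution_function \<Phi>" by (rule distribution_function_limit[OF df conv rc UI])
  note Cm = distribution_function_borel[OF df]
  note C01 = distribution_function_bounds[OF df]
  note tails_pos = unif_integrable_dists_tails(1)[OF df UI]
    and tails_neg = unif_integrable_dists_tails(2)[OF df UI]
  have S: "{0<..} \<in> sets (borel :: real measure)" "{..<0} \<in> sets (borel :: real measure)" by simp_all
  have m: "(\<lambda>y. 1 - C n y) \<in> borel_measurable borel" for n using Cm[of n] by simp
  have b: "0 \<le> 1 - C n y \<and> 1 - C n y \<le> 1" "0 \<le> C n y \<and> C n y \<le> 1" for n y using C01 by auto
  have l: "(\<lambda>n. 1 - C n y) \<longlonglongrightarrow> 1 - \<Phi> y" for y by (intro tendsto_intros conv)
  note pos = nn_integral_tendsto_of_uniform_tails[OF S(1) m b(1) l tails_pos]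
    and neg = nn_integral_tendsto_of_uniform_tails[OF S(2) Cm b(2) conv tails_neg]
  have lint_C: "(LINT y:{0<..}|lborel. 1 - C n y) = enn2real (\<integral>\<^sup>+ y. indicator {0<..} y * ennreal (1 - C n y) \<partial>lborel)"
    "(LINT y:{..<0}|lborel. C n y) = enn2real (\<integral>\<^sup>+ y. indicator {..<0} y * ennreal (C n y) \<partial>lborel)" for n
    using Cm[of n] C01 by (auto intro!: set_lebesgue_integral_eq_nn_integral)
  have lint_\<Phi>: "(LINT y:{0<..}|lborel. 1 - \<Phi> y) = enn2real (\<integral>\<^sup>+ y. indicator {0<..} y * ennreal (1 - \<Phi> y) \<partial>lborel)"
    "(LINT y:{..<0}|lborel. \<Phi> y) = enn2real (\<integral>\<^sup>+ y. indicator {..<0} y * ennreal (\<Phi> y) \<partial>lborel)"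
    using distribution_function_borel[OF df\<Phi>] distribution_function_bounds[OF df\<Phi>]
    by (auto intro!: set_lebesgue_integral_eq_nn_integral)
  have "(\<integral>y. y \<partial>interval_measure \<Phi>) = (LINT y:{0<..}|lborel. 1 - \<Phi> y) - (LINT y:{..<0}|lborel. \<Phi> y)"
    using expectation_eq_cdf_integrals(2)[OF distribution_function_real_distribution[OF df\<Phi>]]
      pos(1) neg(1) by (simp add: distribution_function_cdf[OF df\<Phi>])
  then show ?thesis unfolding lint_C lint_\<Phi> using tendsto_diff[OF pos(2) neg(2)] by simp
qed

lemma mean_tendsto_of_cdf_tendsto_eventually:
  assumes df: "\<forall>\<^sub>F n in sequentially. distribution_function (C n)"
    and conv: "\<And>y. (\<lambda>n. C n y) \<longlonglongrightarrow> \<Phi> y" and rc: "\<And>a. continuous (at_right a) \<Phi>"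
    and UI: "unif_integrable_dists (\<lambda>n. interval_measure (C n))"
  shows "(\<lambda>n. (LINT y:{0<..}|lborel. 1 - C n y) - (LINT y:{..<0}|lborel. C n y))
           \<longlonglongrightarrow> (\<integral>y. y \<partial>interval_measure \<Phi>)"
proof -
  obtain n0 where n0: "\<And>n. n \<ge> n0 \<Longrightarrow> distribution_function (C n)"
    using df unfolding eventually_sequentially by blast
  have "unif_integrable_dists (\<lambda>n. interval_measure (C (n + n0)))"
    using UI unfolding unif_integrable_dists_def by blast
  then have "(\<lambda>n. (LINT y:{0<..}|lborel. 1 - C (n + n0) y) - (LINT y:{..<0}|lborel. C (n + n0) y))
      \<longlonglongrightarrow> (\<integral>y. y \<partial>interval_measure \<Phi>)"
    by (intro mean_tendsto_of_cdf_tendsto n0 LIMSEQ_ignore_initial_segment conv rc) auto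
  then show ?thesis by (rule LIMSEQ_offset)
qed

section \<open>Checkerboard approximation of a kernel\<close>

lemma measure_atMost_inter_cb_interval:
  assumes N: "1 \<le> N" and j: "1 \<le> j" and v: "0 \<le> v"
  shows "measure lborel ({0..v} \<inter> cb_interval N j) = max 0 (min v (real j / real N) - (real j - 1) / real N)"
proof (cases "j = 1")
  case True
  then have "{0..v} \<inter> cb_interval N j = {0..min v (1 / real N)}" by (auto simp: cb_interval_def)
  then show ?thesis using True v N by (simp add: max_def min_def)
next
  case False
  have "x \<ge> 0" if "real j - 1 < x * real N" for x
    using that False j N by (smt (verit) of_nat_1 of_nat_le_iff zero_less_mult_iff of_nat_0_less_iff)
  then have "{0..v} \<inter> cb_interval N j = {(real j - 1) / real N<..min v (real j / real N)}"
    using False j N v by (auto simp: cb_interval_def divide_simps)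
  then show ?thesis using False j N v by (simp add: max_def min_def)
qed

text \<open>The index i of the checkerboard interval I_i^N containing u.\<close>

definition cb_index :: "nat \<Rightarrow> real \<Rightarrow> nat" where
  "cb_index N u = (if u = 0 then 1 else nat \<lceil>real N * u\<rceil>)"

lemma cb_index_bounds:
  assumes N: "1 \<le> N" and u: "0 \<le> u" "u \<le> 1"
  shows "1 \<le> cb_index N u" "cb_index N u \<le> N"
    "real (cb_index N u) - 1 \<le> real N * u" "real N * u \<le> real (cb_index N u)"
proof -
  have "1 \<le> cb_index N u \<and> cb_index N u \<le> N \<and> real (cb_index N u) - 1 \<le> real N * u \<and> real N * u \<le> real (cb_index N u)"
  proof (cases "u = 0")
    case False
    then have pos: "0 < real N * u" using u N by simp
    have "real N * u \<le> real N" using u N by simp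
    then have "\<lceil>real N * u\<rceil> \<le> int N" by (simp add: ceiling_le_iff)
    moreover have "real (cb_index N u) = of_int \<lceil>real N * u\<rceil>" using False pos by (simp add: cb_index_def)
    ultimately show ?thesis
      using False pos ceiling_correct[of "real N * u"] by (auto simp: cb_index_def le_nat_iff nat_le_iff)
  qed (use N in \<open>simp add: cb_index_def\<close>)
  then show "1 \<le> cb_index N u" "cb_index N u \<le> N"
    "real (cb_index N u) - 1 \<le> real N * u" "real N * u \<le> real (cb_index N u)" by auto
qed

lemma mem_cb_interval_iff:
  assumes N: "1 \<le> N" and u: "0 \<le> u" "u \<le> 1" and i: "1 \<le> i"
  shows "u \<in> cb_interval N i \<longleftrightarrow> i = cb_index N u"
proof -
  have Npos: "real N > 0" using N by simp
  have mem: "u \<in> cb_interval N i \<longleftrightarrow> (if i = 1 then real N * u \<le> 1 else real i - 1 < real N * u \<and> real N * u \<le> real i)"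
    using u Npos by (auto simp: cb_interval_def field_simps)
  show ?thesis
  proof (cases "u = 0")
    case True
    then show ?thesis using i mem by (auto simp: cb_index_def)
  next
    case False
    then have pos: "0 < real N * u" using u Npos by simp
    have "i = cb_index N u \<longleftrightarrow> \<lceil>real N * u\<rceil> = int i"
      using False pos i by (auto simp: cb_index_def)
    also have "\<dots> \<longleftrightarrow> real i - 1 < real N * u \<and> real N * u \<le> real i" by (simp add: ceiling_eq_iff)
    finally show ?thesis using pos i by (auto simp: mem)
  qed
qed

lemma cb_weight_eq:
  assumes N: "1 \<le> N" and v: "0 \<le> v" "v \<le> 1" and j: "1 \<le> j"
  shows "real N * measure lborel ({0..v} \<inter> cb_interval N j) =
    (if j < cb_index N v then 1 else if j = cb_index N v then real N * v - (real (cb_index N v) - 1) else 0)"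
proof -
  note J = cb_index_bounds[OF N v]
  have Npos: "real N > 0" using N by simp
  have "real N * measure lborel ({0..v} \<inter> cb_interval N j) = max 0 (min (real N * v) (real j) - (real j - 1))"
    using measure_atMost_inter_cb_interval[OF N j v(1)] Npos
    by (simp add: max_def min_def divide_simps algebra_simps split: if_splits)
  also have "\<dots> = (if j < cb_index N v then 1 else if j = cb_index N v then real N * v - (real (cb_index N v) - 1) else 0)"
    using J(3,4) by (auto simp: max_def min_def)
  finally show ?thesis .
qed

lemma sum_weighted_differences:
  fixes D :: "nat \<Rightarrow> real"
  assumes J: "1 \<le> J" "J \<le> N"
  shows "(\<Sum>j\<in>{1..N}. (D j - D (j - 1)) * (if j < J then 1 else if j = J then \<theta> else 0))
       = D (J - 1) - D 0 + \<theta> * (D J - D (J - 1))"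
proof -
  have split: "{1..N} = {1..J - 1} \<union> {J} \<union> {J + 1..N}" using J by auto
  have "(\<Sum>j\<in>{1..N}. (D j - D (j - 1)) * (if j < J then 1 else if j = J then \<theta> else 0))
      = (\<Sum>j\<in>{1..J - 1}. D j - D (j - 1)) + \<theta> * (D J - D (J - 1))"
    unfolding split using J by (subst sum.union_disjoint, auto intro!: sum.cong)+
  also have "(\<Sum>j\<in>{1..J - 1}. D j - D (j - 1)) = D (J - 1) - D 0"
    using sum_telescope''[of 0 "J - 1" D] by simp
  finally show ?thesis .
qed

text \<open>N times the mass mu_B(I_i^N x [0, j/N]) of a vertical strip.\<close>

definition strip_mass :: "nat \<Rightarrow> (real \<Rightarrow> real \<Rightarrow> real) \<Rightarrow> nat \<Rightarrow> nat \<Rightarrow> real" where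
  "strip_mass N B i j = real N * (B (real i / real N) (real j / real N) - B ((real i - 1) / real N) (real j / real N))"

lemma cb_kernel_cdf_eq_interpolation:
  assumes N: "1 \<le> N" and u: "0 \<le> u" "u \<le> 1" and v: "0 \<le> v" "v \<le> 1"
  defines "i \<equiv> cb_index N u" and "J \<equiv> cb_index N v"
  shows "cb_kernel_cdf N B u v = strip_mass N B i (J - 1) - strip_mass N B i 0
    + (real N * v - (real J - 1)) * (strip_mass N B i J - strip_mass N B i (J - 1))"
proof -
  have i: "1 \<le> i" "i \<le> N" using cb_index_bounds[OF N u] unfolding i_def by auto
  have J: "1 \<le> J" "J \<le> N" using cb_index_bounds[OF N v] unfolding J_def by auto
  have ind: "indicator (cb_interval N i') u = (if i' = i then 1 else 0 :: real)" if "i' \<in> {1..N}" for i'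
    using mem_cb_interval_iff[OF N u, of i'] that unfolding i_def by (auto simp: indicator_def)
  have "cb_kernel_cdf N B u v = (real N)^2 * (\<Sum>i'\<in>{1..N}. if i' = i then (\<Sum>j\<in>{1..N}.
      rect_mass B N i' j * measure lborel ({0..v} \<inter> cb_interval N j)) else 0)"
    unfolding cb_kernel_cdf_def
    by (intro arg_cong[where f="\<lambda>x. (real N)^2 * x"] sum.cong refl) (auto simp: ind)
  also have "\<dots> = (real N)^2 * (\<Sum>j\<in>{1..N}. rect_mass B N i j * measure lborel ({0..v} \<inter> cb_interval N j))"
    using i by simp
  also have "\<dots> = (\<Sum>j\<in>{1..N}. (strip_mass N B i j - strip_mass N B i (j - 1))
      * (real N * measure lborel ({0..v} \<inter> cb_interval N j)))"
    unfolding sum_distrib_left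
  proof (intro sum.cong refl)
    fix j assume "j \<in> {1..N}"
    then have "real (j - 1) = real j - 1" by auto
    then show "(real N)\<^sup>2 * (rect_mass B N i j * measure lborel ({0..v} \<inter> cb_interval N j)) =
       (strip_mass N B i j - strip_mass N B i (j - 1)) * (real N * measure lborel ({0..v} \<inter> cb_interval N j))"
      unfolding strip_mass_def rect_mass_def by (simp add: power2_eq_square algebra_simps)
  qed
  also have "\<dots> = (\<Sum>j\<in>{1..N}. (strip_mass N B i j - strip_mass N B i (j - 1))
      * (if j < J then 1 else if j = J then real N * v - (real J - 1) else 0))"
    by (intro sum.cong refl) (simp add: cb_weight_eq[OF N v] J_def)
  also have "\<dots> = strip_mass N B i (J - 1) - strip_mass N B i 0
      + (real N * v - (real J - 1)) * (strip_mass N B i J - strip_mass N B i (J - 1))"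
    by (rule sum_weighted_differences[OF J])
  finally show ?thesis .
qed

lemma abs_convex_comb_le:
  fixes x y \<theta> e :: real
  assumes "0 \<le> \<theta>" "\<theta> \<le> 1" "\<bar>x\<bar> \<le> e" "\<bar>y\<bar> \<le> e"
  shows "\<bar>(1 - \<theta>) * x + \<theta> * y\<bar> \<le> e"
proof -
  have "\<bar>(1 - \<theta>) * x + \<theta> * y\<bar> \<le> (1 - \<theta>) * \<bar>x\<bar> + \<theta> * \<bar>y\<bar>"
    using abs_triangle_ineq[of "(1 - \<theta>) * x" "\<theta> * y"] assms by (simp add: abs_mult)
  also have "\<dots> \<le> e" using assms by (intro convex_bound_le) auto
  finally show ?thesis .
qed

lemma cb_interpolation_bounds:
  assumes N: "1 \<le> N" and v: "0 \<le> v" "v \<le> 1"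
  shows "0 \<le> real N * v - (real (cb_index N v) - 1)" "real N * v - (real (cb_index N v) - 1) \<le> 1"
  using cb_index_bounds[OF N v] by auto

lemma cb_kernel_cdf_diff_le:
  assumes N: "1 \<le> N" and u: "0 \<le> u" "u \<le> 1" and v: "0 \<le> v" "v \<le> 1"
    and close: "\<And>a b. a \<in> {0..1} \<Longrightarrow> b \<in> {0..1} \<Longrightarrow> \<bar>B a b - A a b\<bar> \<le> \<delta>"
  shows "\<bar>cb_kernel_cdf N B u v - cb_kernel_cdf N A u v\<bar> \<le> 4 * real N * \<delta>"
proof -
  define i where "i = cb_index N u"
  define J where "J = cb_index N v"
  define \<theta> where "\<theta> = real N * v - (real J - 1)"
  define \<Delta> where "\<Delta> j = strip_mass N B i j - strip_mass N A i j" for j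
  have i: "1 \<le> i" "i \<le> N" using cb_index_bounds[OF N u] unfolding i_def by auto
  have J: "J \<le> N" using cb_index_bounds[OF N v] unfolding J_def by auto
  have \<theta>: "0 \<le> \<theta>" "\<theta> \<le> 1" using cb_interpolation_bounds[OF N v] unfolding \<theta>_def J_def by auto
  have Npos: "real N > 0" using N by simp
  have \<Delta>: "\<bar>\<Delta> j\<bar> \<le> 2 * real N * \<delta>" if "j \<le> N" for j
  proof -
    have p: "real i / real N \<in> {0..1}" "(real i - 1) / real N \<in> {0..1}" "real j / real N \<in> {0..1}"
      using i that Npos by (auto simp: field_simps)
    have "\<Delta> j = real N * ((B (real i / real N) (real j / real N) - A (real i / real N) (real j / real N))
       - (B ((real i - 1) / real N) (real j / real N) - A ((real i - 1) / real N) (real j / real N)))"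
      unfolding \<Delta>_def strip_mass_def by (simp add: algebra_simps)
    moreover have "\<bar>(B (real i / real N) (real j / real N) - A (real i / real N) (real j / real N))
       - (B ((real i - 1) / real N) (real j / real N) - A ((real i - 1) / real N) (real j / real N))\<bar> \<le> 2 * \<delta>"
      using close[OF p(1,3)] close[OF p(2,3)] by linarith
    ultimately show ?thesis using Npos by (simp add: abs_mult mult_left_mono)
  qed
  have "cb_kernel_cdf N B u v - cb_kernel_cdf N A u v = (1 - \<theta>) * \<Delta> (J - 1) + \<theta> * \<Delta> J - \<Delta> 0"
    unfolding cb_kernel_cdf_eq_interpolation[OF N u v] i_def[symmetric] J_def[symmetric] \<theta>_def[symmetric] \<Delta>_def
    by (simp add: algebra_simps)
  also have "\<bar>\<dots>\<bar> \<le> 2 * real N * \<delta> + 2 * real N * \<delta>"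
    using abs_convex_comb_le[OF \<theta> \<Delta> \<Delta>] \<Delta>[of 0] J by (intro order_trans[OF abs_triangle_ineq4 add_mono]) auto
  finally show ?thesis by (simp add: algebra_simps)
qed

lemma set_integral_strip_near:
  fixes f :: "real \<Rightarrow> real"
  assumes fc: "continuous_on {0..1} f" and ab: "0 \<le> a" "a < b" "b \<le> 1"
    and near: "\<And>t. t \<in> {a<..b} \<Longrightarrow> \<bar>f t - c\<bar> \<le> \<epsilon>"
  shows "\<bar>(LINT t:{0..b}|lborel. f t) - (LINT t:{0..a}|lborel. f t) - (b - a) * c\<bar> \<le> (b - a) * \<epsilon>"
proof -
  have int01: "set_integrable lborel {0..1} f" by (rule borel_integrable_atLeastAtMost'[OF fc])
  have intA: "set_integrable lborel {0..a} f" by (rule set_integrable_subset[OF int01]) (use ab in auto)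
  have intB: "set_integrable lborel {a<..b} f" by (rule set_integrable_subset[OF int01]) (use ab in auto)
  have un: "{0..b} = {0..a} \<union> {a<..b}" using ab by auto
  have split: "(LINT t:{0..b}|lborel. f t) = (LINT t:{0..a}|lborel. f t) + (LINT t:{a<..b}|lborel. f t)"
    unfolding un by (rule set_integral_Un[OF _ intA intB]) auto
  have cint: "set_integrable lborel {a<..b} (\<lambda>t. d)" for d :: real
    by (rule set_integrable_subset[OF borel_integrable_atLeastAtMost'[of a b "\<lambda>_. d"]]) auto
  have cval: "(LINT t:{a<..b}|lborel. d) = (b - a) * d" for d :: real
    using ab by (subst set_integral_const) auto
  have "(LINT t:{a<..b}|lborel. f t) \<le> (LINT t:{a<..b}|lborel. c + \<epsilon>)"
    by (rule set_integral_mono[OF intB cint]) (use near in \<open>force simp: abs_le_iff\<close>)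
  moreover have "(LINT t:{a<..b}|lborel. c - \<epsilon>) \<le> (LINT t:{a<..b}|lborel. f t)"
    by (rule set_integral_mono[OF cint intB]) (use near in \<open>force simp: abs_le_iff\<close>)
  ultimately show ?thesis using split cval[of "c + \<epsilon>"] cval[of "c - \<epsilon>"]
    by (simp add: abs_le_iff algebra_simps)
qed

lemma strip_mass_near:
  assumes Aint: "\<And>a w. a \<in> {0..1} \<Longrightarrow> w \<in> {0..1} \<Longrightarrow> A a w = (LINT t:{0..a}|lborel. k t w)"
    and kc: "continuous_on {0..1} (\<lambda>t. k t (real j / real N))"
    and N: "1 \<le> N" and i: "1 \<le> i" "i \<le> N" and j: "j \<le> N"
    and near: "\<And>t. t \<in> {(real i - 1) / real N<..real i / real N} \<Longrightarrow> \<bar>k t (real j / real N) - c\<bar> \<le> \<epsilon>"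
  shows "\<bar>strip_mass N A i j - c\<bar> \<le> \<epsilon>"
proof -
  define a where "a = (real i - 1) / real N"
  define b where "b = real i / real N"
  define w where "w = real j / real N"
  have Npos: "real N > 0" using N by simp
  have ab: "0 \<le> a" "a < b" "b \<le> 1" "b - a = 1 / real N"
    using i Npos by (auto simp: a_def b_def field_simps)
  have w: "w \<in> {0..1}" using j Npos by (auto simp: w_def field_simps)
  have "\<bar>(LINT t:{0..b}|lborel. k t w) - (LINT t:{0..a}|lborel. k t w) - (b - a) * c\<bar> \<le> (b - a) * \<epsilon>"
    by (rule set_integral_strip_near[OF kc[folded w_def] ab(1-3) near[folded a_def b_def w_def]])
  moreover have "strip_mass N A i j = real N * ((LINT t:{0..b}|lborel. k t w) - (LINT t:{0..a}|lborel. k t w))"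
    unfolding strip_mass_def using Aint[OF _ w, of a] Aint[OF _ w, of b] ab
    by (simp add: a_def b_def w_def)
  ultimately have "\<bar>(strip_mass N A i j - c) / real N\<bar> \<le> \<epsilon> / real N"
    using Npos ab(4) by (simp add: diff_divide_distrib)
  then show ?thesis using Npos by (simp add: abs_divide divide_le_cancel)
qed

lemma cb_kernel_cdf_near_kernel:
  fixes k :: "real \<Rightarrow> real \<Rightarrow> real"
  assumes Aint: "\<And>a w. a \<in> {0..1} \<Longrightarrow> w \<in> {0..1} \<Longrightarrow> A a w = (LINT t:{0..a}|lborel. k t w)"
    and kc: "\<And>w. w \<in> {0..1} \<Longrightarrow> continuous_on {0..1} (\<lambda>t. k t w)"
    and A0: "\<And>a. a \<in> {0..1} \<Longrightarrow> A a 0 = 0"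
    and N: "1 \<le> N" and u: "0 \<le> u" "u \<le> 1" and v: "0 \<le> v" "v \<le> 1"
    and modulus: "\<And>t w t' w'. t \<in> {0..1} \<Longrightarrow> w \<in> {0..1} \<Longrightarrow> t' \<in> {0..1} \<Longrightarrow> w' \<in> {0..1} \<Longrightarrow>
        \<bar>t - t'\<bar> \<le> 1 / real N \<Longrightarrow> \<bar>w - w'\<bar> \<le> 1 / real N \<Longrightarrow> \<bar>k t w - k t' w'\<bar> \<le> \<epsilon>"
  shows "\<bar>cb_kernel_cdf N A u v - k u v\<bar> \<le> 2 * \<epsilon>"
proof -
  define i where "i = cb_index N u"
  define J where "J = cb_index N v"
  define \<theta> where "\<theta> = real N * v - (real J - 1)"
  have i: "1 \<le> i" "i \<le> N" "real i - 1 \<le> real N * u" "real N * u \<le> real i"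
    using cb_index_bounds[OF N u] unfolding i_def by auto
  have J: "1 \<le> J" "J \<le> N" using cb_index_bounds[OF N v] unfolding J_def by auto
  have \<theta>: "0 \<le> \<theta>" "\<theta> \<le> 1" using cb_interpolation_bounds[OF N v] unfolding \<theta>_def J_def by auto
  have Npos: "real N > 0" using N by simp
  have grid: "real j / real N \<in> {0..1}" if "j \<le> N" for j using that Npos by (auto simp: field_simps)
  have near_v: "\<bar>k u (real j / real N) - k u v\<bar> \<le> \<epsilon>" if "j = J - 1 \<or> j = J" for j
  proof (rule modulus)
    have "real (J - 1) = real J - 1" using J by auto
    then show "\<bar>real j / real N - v\<bar> \<le> 1 / real N"
      using that \<theta> Npos unfolding \<theta>_def by (auto simp: abs_le_iff field_simps)
  qed (use that J grid u v in auto)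
  have D: "\<bar>strip_mass N A i j - k u v\<bar> \<le> 2 * \<epsilon>" if "j = J - 1 \<or> j = J" for j
  proof -
    have "\<bar>strip_mass N A i j - k u (real j / real N)\<bar> \<le> \<epsilon>"
    proof (rule strip_mass_near[OF Aint kc N i(1,2)])
      fix t assume t: "t \<in> {(real i - 1) / real N<..real i / real N}"
      have "0 \<le> (real i - 1) / real N" "real i / real N \<le> 1"
        "(real i - 1) / real N \<le> u" "u \<le> real i / real N"
        "real i / real N - (real i - 1) / real N = 1 / real N"
        using i Npos by (auto simp: field_simps)
      then have "t \<in> {0..1}" "\<bar>t - u\<bar> \<le> 1 / real N" using t by (auto simp: abs_le_iff)
      then show "\<bar>k t (real j / real N) - k u (real j / real N)\<bar> \<le> \<epsilon>"
        using that J grid u by (intro modulus) auto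
    qed (use that J grid in auto)
    then show ?thesis using near_v[OF that] by linarith
  qed
  have "strip_mass N A i 0 = 0" unfolding strip_mass_def using A0 i Npos by (simp add: field_simps)
  then have "cb_kernel_cdf N A u v - k u v
      = (1 - \<theta>) * (strip_mass N A i (J - 1) - k u v) + \<theta> * (strip_mass N A i J - k u v)"
    unfolding cb_kernel_cdf_eq_interpolation[OF N u v] i_def[symmetric] J_def[symmetric] \<theta>_def[symmetric]
    by (simp add: algebra_simps)
  also have "\<bar>\<dots>\<bar> \<le> 2 * \<epsilon>" using D by (intro abs_convex_comb_le \<theta>) auto
  finally show ?thesis .
qed

lemma continuous_on_Pair_section:
  assumes "continuous_on (S \<times> T) (\<lambda>(a, b). f a b)" and "b \<in> T"
  shows "continuous_on S (\<lambda>a. f a b)"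
  using continuous_on_compose[OF continuous_on_Pair[OF continuous_on_id continuous_on_const[of S b]]
      continuous_on_subset[OF assms(1)]] assms(2) by (auto simp: o_def)

lemma continuous_on_Pair_section':
  assumes "continuous_on (S \<times> T) (\<lambda>(a, b). f a b)" and "a \<in> S"
  shows "continuous_on T (\<lambda>b. f a b)"
  using continuous_on_compose[OF continuous_on_Pair[OF continuous_on_const[of T a] continuous_on_id]
      continuous_on_subset[OF assms(1)]] assms(2) by (auto simp: o_def)

lemma continuous_on_unit_square_modulus:
  fixes k :: "real \<Rightarrow> real \<Rightarrow> real"
  assumes kc: "continuous_on ({0..1} \<times> {0..1}) (\<lambda>(t, w). k t w)" and e: "e > 0"
  obtains d where "d > 0" and "\<And>t w t' w'. t \<in> {0..1} \<Longrightarrow> w \<in> {0..1} \<Longrightarrow> t' \<in> {0..1} \<Longrightarrow> w' \<in> {0..1} \<Longrightarrow>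
    \<bar>t - t'\<bar> + \<bar>w - w'\<bar> < d \<Longrightarrow> \<bar>k t w - k t' w'\<bar> < e"
proof -
  have "uniformly_continuous_on ({0..1} \<times> {0..1}) (\<lambda>(t, w). k t w)"
    by (rule compact_uniformly_continuous[OF kc]) (intro compact_Times compact_Icc)
  then obtain d where d: "d > 0" and dd: "\<And>p p'. p \<in> {0..1} \<times> {0..1} \<Longrightarrow> p' \<in> {0..1} \<times> {0..1} \<Longrightarrow>
      dist p' p < d \<Longrightarrow> dist ((\<lambda>(t, w). k t w) p') ((\<lambda>(t, w). k t w) p) < e"
    unfolding uniformly_continuous_on_def using e by metis
  show ?thesis
  proof (rule that[OF d])
    fix t w t' w' :: real
    assume "t \<in> {0..1}" "w \<in> {0..1}" "t' \<in> {0..1}" "w' \<in> {0..1}" and near: "\<bar>t - t'\<bar> + \<bar>w - w'\<bar> < d"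
    moreover have "dist (t, w) (t', w') \<le> \<bar>t - t'\<bar> + \<bar>w - w'\<bar>"
      using norm_Pair_le[of "t - t'" "w - w'"] by (simp add: dist_norm)
    ultimately show "\<bar>k t w - k t' w'\<bar> < e"
      using dd[of "(t', w')" "(t, w)"] by (simp add: dist_real_def)
  qed
qed

lemma cb_kernel_cdf_tendsto:
  fixes k :: "real \<Rightarrow> real \<Rightarrow> real" and Nn :: "nat \<Rightarrow> nat"
  assumes Aint: "\<And>a w. a \<in> {0..1} \<Longrightarrow> w \<in> {0..1} \<Longrightarrow> A a w = (LINT t:{0..a}|lborel. k t w)"
    and kc: "continuous_on ({0..1} \<times> {0..1}) (\<lambda>(t, w). k t w)"
    and A0: "\<And>a. a \<in> {0..1} \<Longrightarrow> A a 0 = 0"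
    and Nn: "filterlim Nn at_top sequentially"
    and close: "\<And>e. e > 0 \<Longrightarrow>
      \<forall>\<^sub>F n in sequentially. \<forall>a\<in>{0..1}. \<forall>b\<in>{0..1}. real (Nn n) * \<bar>B n a b - A a b\<bar> \<le> e"
    and un: "un \<longlonglongrightarrow> u" "\<And>n. un n \<in> {0..1}" and vn: "vn \<longlonglongrightarrow> v" "\<And>n. vn n \<in> {0..1}"
  shows "(\<lambda>n. cb_kernel_cdf (Nn n) (B n) (un n) (vn n)) \<longlonglongrightarrow> k u v"
proof (rule tendstoI)
  fix e :: real assume e: "e > 0"
  obtain d where d: "d > 0" and modulus: "\<And>t w t' w'. t \<in> {0..1} \<Longrightarrow> w \<in> {0..1} \<Longrightarrow> t' \<in> {0..1} \<Longrightarrow>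
      w' \<in> {0..1} \<Longrightarrow> \<bar>t - t'\<bar> + \<bar>w - w'\<bar> < d \<Longrightarrow> \<bar>k t w - k t' w'\<bar> < e / 8"
    by (rule continuous_on_unit_square_modulus[OF kc, of "e / 8"]) (use e in auto)
  have uv: "(u, v) \<in> {0..1} \<times> {0..1}"
    by (rule Lim_in_closed_set[OF closed_Times[OF closed_atLeastAtMost closed_atLeastAtMost] _ _
        tendsto_Pair[OF un(1) vn(1)]]) (use un(2) vn(2) in auto)
  then have "(\<lambda>n. (\<lambda>(t, w). k t w) (un n, vn n)) \<longlonglongrightarrow> (\<lambda>(t, w). k t w) (u, v)"
    using un vn by (intro continuous_on_tendsto_compose[OF kc] tendsto_Pair) auto
  then have "\<forall>\<^sub>F n in sequentially. dist (k (un n) (vn n)) (k u v) < e / 4"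
    using tendstoD[of _ "k u v" sequentially "e / 4"] e by simp
  moreover have "\<forall>\<^sub>F n in sequentially. \<forall>a\<in>{0..1}. \<forall>b\<in>{0..1}. real (Nn n) * \<bar>B n a b - A a b\<bar> \<le> e / 16"
    using close[of "e / 16"] e by simp
  moreover have "\<forall>\<^sub>F n in sequentially. max 1 (4 / d) \<le> real (Nn n)"
    using filterlim_at_top_dense[THEN iffD1, OF filterlim_real_sequentially[THEN filterlim_compose, OF Nn],
        rule_format, of "max 1 (4 / d)"]
    by (auto simp: o_def elim!: eventually_mono)
  ultimately show "\<forall>\<^sub>F n in sequentially. dist (cb_kernel_cdf (Nn n) (B n) (un n) (vn n)) (k u v) < e"
  proof eventually_elim
    case (elim n)
    define N where "N = Nn n"
    have N: "1 \<le> N" and Npos: "real N > 0" and Nd: "2 / real N < d"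
      using elim(3) d unfolding N_def by (auto simp: field_simps)
    have uu: "0 \<le> un n" "un n \<le> 1" "0 \<le> vn n" "vn n \<le> 1" using un(2)[of n] vn(2)[of n] by auto
    have "\<bar>k t w - k t' w'\<bar> \<le> e / 8"
      if "t \<in> {0..1}" "w \<in> {0..1}" "t' \<in> {0..1}" "w' \<in> {0..1}"
        "\<bar>t - t'\<bar> \<le> 1 / real N" "\<bar>w - w'\<bar> \<le> 1 / real N" for t w t' w'
    proof -
      have "2 / real N = 2 * (1 / real N)" by simp
      then have "\<bar>t - t'\<bar> + \<bar>w - w'\<bar> < d" using that(5,6) Nd by linarith
      then show ?thesis using modulus[OF that(1-4)] by (simp add: less_imp_le)
    qed
    moreover have "continuous_on {0..1} (\<lambda>t. k t w)" if "w \<in> {0..1}" for w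
      using continuous_on_Pair_section[OF kc that] .
    ultimately have "\<bar>cb_kernel_cdf N A (un n) (vn n) - k (un n) (vn n)\<bar> \<le> 2 * (e / 8)"
      using cb_kernel_cdf_near_kernel[where k = k, OF Aint _ A0 N uu] by blast
    moreover have "\<bar>B n a b - A a b\<bar> \<le> e / 16 / real N" if "a \<in> {0..1}" "b \<in> {0..1}" for a b
      using elim(2) that Npos unfolding N_def[symmetric] by (simp add: field_simps mult.commute)
    then have "\<bar>cb_kernel_cdf N (B n) (un n) (vn n) - cb_kernel_cdf N A (un n) (vn n)\<bar> \<le> 4 * real N * (e / 16 / real N)"
      by (rule cb_kernel_cdf_diff_le[OF N uu])
    moreover have "4 * real N * (e / 16 / real N) = e / 4" using Npos by simp
    ultimately show ?case using elim(1) unfolding N_def[symmetric] dist_real_def by linarith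
  qed
qed

lemma cb_kernel_cdf_mono:
  assumes mass: "\<And>i j. i \<in> {1..N} \<Longrightarrow> j \<in> {1..N} \<Longrightarrow> rect_mass B N i j \<ge> 0"
    and N: "1 \<le> N" and v: "0 \<le> v" "v \<le> v'"
  shows "cb_kernel_cdf N B u v \<le> cb_kernel_cdf N B u v'"
  unfolding cb_kernel_cdf_def
proof (rule mult_left_mono[OF sum_mono[OF sum_mono]])
  fix i j assume i: "i \<in> {1..N}" and j: "j \<in> {1..N}"
  have "measure lborel ({0..v} \<inter> cb_interval N j) \<le> measure lborel ({0..v'} \<inter> cb_interval N j)"
    using measure_atMost_inter_cb_interval[OF N _ v(1), of j]
      measure_atMost_inter_cb_interval[OF N _ order_trans[OF v], of j] j v by auto
  moreover have "rect_mass B N i j * indicator (cb_interval N i) u \<ge> 0" using mass[OF i j] by simp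
  ultimately show "rect_mass B N i j * indicator (cb_interval N i) u * measure lborel ({0..v} \<inter> cb_interval N j)
       \<le> rect_mass B N i j * indicator (cb_interval N i) u * measure lborel ({0..v'} \<inter> cb_interval N j)"
    by (rule mult_left_mono)
qed simp

lemma cb_kernel_cdf_zero:
  assumes N: "1 \<le> N"
  shows "cb_kernel_cdf N B u 0 = 0"
proof -
  have "measure lborel ({0..0} \<inter> cb_interval N j) = 0" if "j \<in> {1..N}" for j
    using measure_atMost_inter_cb_interval[OF N _ order_refl, of j] that N by (auto simp: max_def min_def field_simps)
  then show ?thesis unfolding cb_kernel_cdf_def by simp
qed

lemma cb_kernel_cdf_one:
  assumes N: "1 \<le> N" and u: "0 \<le> u" "u \<le> 1"
    and B1: "\<And>a. a \<in> {0..1} \<Longrightarrow> B a 1 = a" and B0: "\<And>a. a \<in> {0..1} \<Longrightarrow> B a 0 = 0"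
  shows "cb_kernel_cdf N B u 1 = 1"
proof -
  define i where "i = cb_index N u"
  have i: "1 \<le> i" "i \<le> N" using cb_index_bounds[OF N u] unfolding i_def by auto
  have J: "cb_index N 1 = N" using N by (simp add: cb_index_def)
  have Npos: "real N > 0" using N by simp
  have p: "real i / real N \<in> {0..1}" "(real i - 1) / real N \<in> {0..1}" using i Npos by (auto simp: field_simps)
  have "strip_mass N B i N = 1" unfolding strip_mass_def using Npos B1[OF p(1)] B1[OF p(2)] by (simp add: field_simps)
  moreover have "strip_mass N B i 0 = 0" unfolding strip_mass_def using B0[OF p(1)] B0[OF p(2)] by simp
  ultimately show ?thesis using cb_kernel_cdf_eq_interpolation[OF N u, of 1 B] J N by (simp add: i_def of_nat_diff)
qed

section \<open>The empirical copula\<close>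

definition count_le :: "(nat \<Rightarrow> real) \<Rightarrow> nat \<Rightarrow> real \<Rightarrow> nat" where
  "count_le f n x = card {i. i < n \<and> f i \<le> x}"

definition sample_rank :: "(nat \<Rightarrow> real) \<Rightarrow> nat \<Rightarrow> nat \<Rightarrow> nat" where
  "sample_rank f n k = count_le f n (f k)"

lemma finite_count_le_set:
  fixes f :: "nat \<Rightarrow> real"
  shows "finite {i. i < n \<and> f i \<le> x}"
  by (rule finite_subset[of _ "{..<n}"]) auto

lemma count_le_le: "count_le f n x \<le> n"
  unfolding count_le_def using card_mono[of "{..<n}" "{i. i < n \<and> f i \<le> x}"] by auto

lemma count_le_mono: "x \<le> y \<Longrightarrow> count_le f n x \<le> count_le f n y"
  unfolding count_le_def by (intro card_mono finite_count_le_set) auto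

lemma le_iff_sample_rank_le:
  assumes k: "k < n"
  shows "f k \<le> x \<longleftrightarrow> sample_rank f n k \<le> count_le f n x"
proof
  assume "f k \<le> x" then show "sample_rank f n k \<le> count_le f n x"
    unfolding sample_rank_def by (rule count_le_mono)
next
  assume le: "sample_rank f n k \<le> count_le f n x"
  show "f k \<le> x"
  proof (rule ccontr)
    assume "\<not> f k \<le> x"
    then have "{i. i < n \<and> f i \<le> x} \<subset> {i. i < n \<and> f i \<le> f k}" using k by auto
    then have "count_le f n x < sample_rank f n k"
      unfolding count_le_def sample_rank_def by (intro psubset_card_mono finite_count_le_set)
    then show False using le by simp
  qed
qed

lemma bij_betw_sample_rank:
  assumes inj: "inj_on f {..<n}"
  shows "bij_betw (sample_rank f n) {..<n} {1..n}"
proof -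
  have "1 \<le> sample_rank f n k" if "k < n" for k
  proof -
    have "{i. i < n \<and> f i \<le> f k} \<noteq> {}" using that by auto
    then show ?thesis unfolding sample_rank_def count_le_def
      by (simp add: Suc_le_eq card_gt_0_iff finite_count_le_set)
  qed
  then have sub: "sample_rank f n ` {..<n} \<subseteq> {1..n}"
    using count_le_le by (auto simp: sample_rank_def)
  have inj_rank: "inj_on (sample_rank f n) {..<n}"
  proof (rule inj_onI)
    fix k k' assume "k \<in> {..<n}" "k' \<in> {..<n}" "sample_rank f n k = sample_rank f n k'"
    then have "f k = f k'" using le_iff_sample_rank_le[of k n f "f k'"] le_iff_sample_rank_le[of k' n f "f k"]
      by (auto simp: sample_rank_def)
    then show "k = k'" using inj \<open>k \<in> {..<n}\<close> \<open>k' \<in> {..<n}\<close> by (auto dest: inj_onD)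
  qed
  then have "card (sample_rank f n ` {..<n}) = card {1..n}" by (simp add: card_image)
  then have "sample_rank f n ` {..<n} = {1..n}" using sub by (intro card_subset_eq) auto
  then show ?thesis using inj_rank by (simp add: bij_betw_def)
qed

lemma count_le_surj:
  assumes inj: "inj_on f {..<n}" and m: "m \<le> n"
  obtains x where "count_le f n x = m"
proof (cases "m = 0")
  case True
  define x where "x = Min (insert 0 (f ` {..<n})) - 1"
  have "x < f i" if "i < n" for i
  proof -
    have "Min (insert 0 (f ` {..<n})) \<le> f i" using that by (intro Min_le) auto
    then show ?thesis unfolding x_def by linarith
  qed
  then have "{i. i < n \<and> f i \<le> x} = {}" by force
  then show ?thesis using that True unfolding count_le_def by (metis card.empty)
next
  case False
  then have "m \<in> sample_rank f n ` {..<n}"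
    using bij_betw_sample_rank[OF inj] m by (simp add: bij_betw_def)
  then obtain k where "k < n" "sample_rank f n k = m" by auto
  then show ?thesis using that unfolding sample_rank_def by blast
qed

lemma card_rectangle_diff_nonneg:
  fixes A A' B B' :: "nat set"
  assumes "finite A'" "finite B'" "A \<subseteq> A'" "B \<subseteq> B'"
  shows "real (card (A' \<inter> B')) - real (card (A \<inter> B')) - real (card (A' \<inter> B)) + real (card (A \<inter> B)) \<ge> 0"
proof -
  have "card (A' \<inter> B') = card (A \<inter> B') + card ((A' - A) \<inter> B')"
    "card (A' \<inter> B) = card (A \<inter> B) + card ((A' - A) \<inter> B)"
    using assms by (subst card_Un_disjoint[symmetric]; auto intro: finite_subset arg_cong[where f=card])+
  moreover have "card ((A' - A) \<inter> B) \<le> card ((A' - A) \<inter> B')"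
    using assms by (intro card_mono) auto
  ultimately show ?thesis by simp
qed

text \<open>The empirical subcopula in terms of the ranks rX k, rY k of the k-th observation.\<close>

definition rank_subcopula :: "nat \<Rightarrow> (nat \<Rightarrow> nat) \<Rightarrow> (nat \<Rightarrow> nat) \<Rightarrow> nat \<Rightarrow> nat \<Rightarrow> real" where
  "rank_subcopula n rX rY i j =
     (if i \<le> n \<and> j \<le> n then real (card {k. k < n \<and> rX k \<le> i \<and> rY k \<le> j}) / real n else 0)"

lemma card_rank_le:
  assumes "bij_betw r {..<n} {1..n}" and "j \<le> n"
  shows "card {k. k < n \<and> r k \<le> j} = j"
proof -
  have "r ` {k. k < n \<and> r k \<le> j} = {1..j}"
  proof
    show "r ` {k. k < n \<and> r k \<le> j} \<subseteq> {1..j}" using assms(1) by (auto simp: bij_betw_def)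
    show "{1..j} \<subseteq> r ` {k. k < n \<and> r k \<le> j}"
    proof
      fix x assume x: "x \<in> {1..j}"
      then have "x \<in> r ` {..<n}" using assms by (auto simp: bij_betw_def)
      then show "x \<in> r ` {k. k < n \<and> r k \<le> j}" using x by auto
    qed
  qed
  then have "bij_betw r {k. k < n \<and> r k \<le> j} {1..j}"
    by (intro bij_betw_subset[OF assms(1)]) auto
  then show ?thesis by (simp add: bij_betw_same_card)
qed

lemma grid_subcopula_rank_subcopula:
  assumes rX: "bij_betw rX {..<n} {1..n}" and rY: "bij_betw rY {..<n} {1..n}"
  shows "grid_subcopula n (rank_subcopula n rX rY)"
  unfolding grid_subcopula_def
proof (intro conjI allI impI ballI)
  have pos: "1 \<le> rX k" "1 \<le> rY k" if "k < n" for k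
    using that rX rY by (auto simp: bij_betw_def)
  have le: "rX k \<le> n" "rY k \<le> n" if "k < n" for k
    using that rX rY by (auto simp: bij_betw_def)
  fix i j
  show "n < i \<or> n < j \<Longrightarrow> rank_subcopula n rX rY i j = 0" by (auto simp: rank_subcopula_def)
  show "j \<le> n \<Longrightarrow> rank_subcopula n rX rY 0 j = 0" "i \<le> n \<Longrightarrow> rank_subcopula n rX rY i 0 = 0"
    using pos by (fastforce simp: rank_subcopula_def)+
  show "j \<le> n \<Longrightarrow> rank_subcopula n rX rY n j = real j / real n"
    using card_rank_le[OF rY, of j] le by (simp add: rank_subcopula_def cong: conj_cong)
  show "i \<le> n \<Longrightarrow> rank_subcopula n rX rY i n = real i / real n"
    using card_rank_le[OF rX, of i] le by (simp add: rank_subcopula_def cong: conj_cong)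
  assume i: "i < n" and j: "j < n"
  let ?A = "\<lambda>a. {k. k < n \<and> rX k \<le> a}" and ?B = "\<lambda>b. {k. k < n \<and> rY k \<le> b}"
  have "real (card (?A (Suc i) \<inter> ?B (Suc j))) - real (card (?A i \<inter> ?B (Suc j)))
      - real (card (?A (Suc i) \<inter> ?B j)) + real (card (?A i \<inter> ?B j)) \<ge> 0"
    by (rule card_rectangle_diff_nonneg) auto
  moreover have "?A a \<inter> ?B b = {k. k < n \<and> rX k \<le> a \<and> rY k \<le> b}" for a b by auto
  ultimately show "rank_subcopula n rX rY (Suc i) (Suc j) - rank_subcopula n rX rY i (Suc j)
      - rank_subcopula n rX rY (Suc i) j + rank_subcopula n rX rY i j \<ge> 0"
    using i j by (simp add: rank_subcopula_def diff_divide_distrib[symmetric] add_divide_distrib[symmetric])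
qed

lemma emp_joint_eq_rank_subcopula:
  "emp_joint Xs Ys n \<omega> x y = rank_subcopula n (sample_rank (\<lambda>i. Xs i \<omega>) n) (sample_rank (\<lambda>i. Ys i \<omega>) n)
     (count_le (\<lambda>i. Xs i \<omega>) n x) (count_le (\<lambda>i. Ys i \<omega>) n y)"
proof -
  let ?fX = "\<lambda>i. Xs i \<omega>" and ?fY = "\<lambda>i. Ys i \<omega>"
  have "{i. i < n \<and> Xs i \<omega> \<le> x \<and> Ys i \<omega> \<le> y}
      = {k. k < n \<and> sample_rank ?fX n k \<le> count_le ?fX n x \<and> sample_rank ?fY n k \<le> count_le ?fY n y}"
    using le_iff_sample_rank_le[of _ n ?fX x] le_iff_sample_rank_le[of _ n ?fY y] by blast
  then show ?thesis by (simp add: emp_joint_def rank_subcopula_def count_le_le)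
qed

lemma emp_subcopula_eq_rank_subcopula:
  fixes Xs Ys :: "nat \<Rightarrow> 'a \<Rightarrow> real"
  assumes injX: "inj_on (\<lambda>i. Xs i \<omega>) {..<n}" and injY: "inj_on (\<lambda>i. Ys i \<omega>) {..<n}"
  shows "emp_subcopula Xs Ys n \<omega> = rank_subcopula n (sample_rank (\<lambda>i. Xs i \<omega>) n) (sample_rank (\<lambda>i. Ys i \<omega>) n)"
proof -
  let ?fX = "\<lambda>i. Xs i \<omega>" and ?fY = "\<lambda>i. Ys i \<omega>"
  let ?S0 = "rank_subcopula n (sample_rank ?fX n) (sample_rank ?fY n)"
  have grid: "grid_subcopula n ?S0"
    by (intro grid_subcopula_rank_subcopula bij_betw_sample_rank injX injY)
  have unique: "S = ?S0" if S: "grid_subcopula n S"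
    and SH: "\<And>x y. emp_joint Xs Ys n \<omega> x y = S (count_le ?fX n x) (count_le ?fY n y)" for S
  proof (intro ext)
    fix i j
    show "S i j = ?S0 i j"
    proof (cases "i \<le> n \<and> j \<le> n")
      case True
      then obtain x y where "count_le ?fX n x = i" "count_le ?fY n y = j"
        using count_le_surj[OF injX] count_le_surj[OF injY] by metis
      then show ?thesis using SH[of x y] emp_joint_eq_rank_subcopula[of Xs Ys n \<omega> x y] by simp
    next
      case False
      then show ?thesis using S grid unfolding grid_subcopula_def by (auto simp: not_le)
    qed
  qed
  show ?thesis
    unfolding emp_subcopula_def count_le_def[symmetric]
    using grid emp_joint_eq_rank_subcopula unique by (intro the_equality) auto
qed

lemma emp_joint_eq_emp_subcopula:
  fixes Xs Ys :: "nat \<Rightarrow> 'a \<Rightarrow> real"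
  assumes "inj_on (\<lambda>i. Xs i \<omega>) {..<n}" and "inj_on (\<lambda>i. Ys i \<omega>) {..<n}"
  shows "emp_joint Xs Ys n \<omega> x y = emp_subcopula Xs Ys n \<omega> (count_le (\<lambda>i. Xs i \<omega>) n x) (count_le (\<lambda>i. Ys i \<omega>) n y)"
  using emp_joint_eq_rank_subcopula
    emp_subcopula_eq_rank_subcopula[where Xs = Xs and Ys = Ys and \<omega> = \<omega> and n = n, OF assms] by metis

lemma emp_df_eq_count_le: "emp_df Xs n \<omega> x = real (count_le (\<lambda>i. Xs i \<omega>) n x) / real n"
  by (simp add: emp_df_def count_le_def)

lemma copulaD:
  assumes C: "copula A"
  shows copula_zero_right: "\<And>u. u \<in> {0..1} \<Longrightarrow> A u 0 = 0"
    and copula_zero_left: "\<And>v. v \<in> {0..1} \<Longrightarrow> A 0 v = 0"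
    and copula_one_right: "\<And>u. u \<in> {0..1} \<Longrightarrow> A u 1 = u"
    and copula_one_left: "\<And>v. v \<in> {0..1} \<Longrightarrow> A 1 v = v"
    and copula_2_increasing: "\<And>u1 u2 v1 v2. 0 \<le> u1 \<Longrightarrow> u1 \<le> u2 \<Longrightarrow> u2 \<le> 1 \<Longrightarrow> 0 \<le> v1 \<Longrightarrow> v1 \<le> v2 \<Longrightarrow> v2 \<le> 1 \<Longrightarrow>
        A u2 v2 - A u1 v2 - A u2 v1 + A u1 v1 \<ge> 0"
  using C unfolding copula_def by auto

lemma copula_diff_first_bounds:
  assumes C: "copula A" and "0 \<le> u" "u \<le> u'" "u' \<le> 1" "0 \<le> v" "v \<le> 1"
  shows "0 \<le> A u' v - A u v" "A u' v - A u v \<le> u' - u"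
  using copula_2_increasing[OF C, of u u' 0 v] copula_2_increasing[OF C, of u u' v 1]
    copula_zero_right[OF C, of u] copula_zero_right[OF C, of u']
    copula_one_right[OF C, of u] copula_one_right[OF C, of u'] assms
  by auto

lemma copula_diff_second_bounds:
  assumes C: "copula A" and "0 \<le> v" "v \<le> v'" "v' \<le> 1" "0 \<le> u" "u \<le> 1"
  shows "0 \<le> A u v' - A u v" "A u v' - A u v \<le> v' - v"
  using copula_2_increasing[OF C, of 0 u v v'] copula_2_increasing[OF C, of u 1 v v']
    copula_zero_left[OF C, of v] copula_zero_left[OF C, of v']
    copula_one_left[OF C, of v] copula_one_left[OF C, of v'] assms
  by auto

lemma copula_Lipschitz:
  assumes C: "copula A" and "u \<in> {0..1}" "u' \<in> {0..1}" "v \<in> {0..1}" "v' \<in> {0..1}"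
  shows "\<bar>A u v - A u' v'\<bar> \<le> \<bar>u - u'\<bar> + \<bar>v - v'\<bar>"
proof -
  have "\<bar>A u v - A u' v\<bar> \<le> \<bar>u - u'\<bar>"
    using copula_diff_first_bounds[OF C, of u u' v] copula_diff_first_bounds[OF C, of u' u v] assms
    by (cases "u \<le> u'") auto
  moreover have "\<bar>A u' v - A u' v'\<bar> \<le> \<bar>v - v'\<bar>"
    using copula_diff_second_bounds[OF C, of v v' u'] copula_diff_second_bounds[OF C, of v' v u'] assms
    by (cases "v \<le> v'") auto
  ultimately show ?thesis by linarith
qed

lemma grid_bilinear_index_bounds:
  assumes n: "1 \<le> n" and u: "0 \<le> u" "u \<le> 1"
  defines "i \<equiv> min (nat \<lfloor>real n * u\<rfloor>) (n - 1)"
  shows "i \<le> n - 1" "0 \<le> real n * u - real i" "real n * u - real i \<le> 1"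
proof -
  have nu: "0 \<le> real n * u" "real n * u \<le> real n" using u n by (auto simp: mult_left_le)
  show "i \<le> n - 1" by (simp add: i_def)
  have "real i \<le> real (nat \<lfloor>real n * u\<rfloor>)" by (simp add: i_def)
  then show "0 \<le> real n * u - real i" using nu by linarith
  show "real n * u - real i \<le> 1"
  proof (cases "nat \<lfloor>real n * u\<rfloor> \<le> n - 1")
    case True
    then show ?thesis using nu by (simp add: i_def) linarith
  next
    case False
    then have "real i = real n - 1" using n by (simp add: i_def of_nat_diff)
    then show ?thesis using nu by linarith
  qed
qed

lemma grid_bilinear_near:
  fixes S :: "nat \<Rightarrow> nat \<Rightarrow> real"
  assumes n: "1 \<le> n" and u: "0 \<le> u" "u \<le> 1" and v: "0 \<le> v" "v \<le> 1"
    and corner: "\<And>a b. a \<le> n \<Longrightarrow> b \<le> n \<Longrightarrow> \<bar>real a / real n - u\<bar> \<le> 1 / real n \<Longrightarrow>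
        \<bar>real b / real n - v\<bar> \<le> 1 / real n \<Longrightarrow> \<bar>S a b - c\<bar> \<le> \<eta>"
  shows "\<bar>grid_bilinear n S u v - c\<bar> \<le> \<eta>"
proof -
  define i where "i = min (nat \<lfloor>real n * u\<rfloor>) (n - 1)"
  define j where "j = min (nat \<lfloor>real n * v\<rfloor>) (n - 1)"
  define s where "s = real n * u - real i"
  define t where "t = real n * v - real j"
  have fi: "i \<le> n - 1" "0 \<le> s" "s \<le> 1" using grid_bilinear_index_bounds[OF n u] unfolding i_def s_def by auto
  have fj: "j \<le> n - 1" "0 \<le> t" "t \<le> 1" using grid_bilinear_index_bounds[OF n v] unfolding j_def t_def by auto
  have Npos: "real n > 0" using n by simp
  have near: "\<bar>real a / real n - w\<bar> \<le> 1 / real n" if "\<bar>real a - real n * w\<bar> \<le> 1" for a w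
  proof -
    have "real a / real n - w = (real a - real n * w) / real n" using Npos by (simp add: field_simps)
    then show ?thesis using that Npos by (simp add: abs_divide divide_right_mono)
  qed
  have c: "\<bar>S a b - c\<bar> \<le> \<eta>" if "a = i \<or> a = Suc i" "b = j \<or> b = Suc j" for a b
    using that fi fj n by (intro corner near) (auto simp: s_def t_def)
  have "grid_bilinear n S u v - c = (1 - s) * ((1 - t) * (S i j - c) + t * (S i (Suc j) - c))
      + s * ((1 - t) * (S (Suc i) j - c) + t * (S (Suc i) (Suc j) - c))"
    unfolding grid_bilinear_def Let_def i_def[symmetric] j_def[symmetric] s_def[symmetric] t_def[symmetric]
    by (simp add: algebra_simps)
  also have "\<bar>\<dots>\<bar> \<le> \<eta>" using fi fj c by (intro abs_convex_comb_le) auto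
  finally show ?thesis .
qed

lemma emp_copula_near:
  fixes Xs Ys :: "nat \<Rightarrow> 'a \<Rightarrow> real"
  assumes C: "copula A" and injX: "inj_on (\<lambda>i. Xs i \<omega>) {..<n}" and injY: "inj_on (\<lambda>i. Ys i \<omega>) {..<n}"
    and n: "1 \<le> n"
    and HA: "\<And>x y. H x y = A (F x) (G y)" and F01: "\<And>x. F x \<in> {0..1}" and G01: "\<And>y. G y \<in> {0..1}"
    and dH: "\<And>x y. \<bar>emp_joint Xs Ys n \<omega> x y - H x y\<bar> \<le> \<delta>"
    and dF: "\<And>x. \<bar>emp_df Xs n \<omega> x - F x\<bar> \<le> \<delta>"
    and dG: "\<And>y. \<bar>emp_df Ys n \<omega> y - G y\<bar> \<le> \<delta>"
    and u: "u \<in> {0..1}" and v: "v \<in> {0..1}"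
  shows "\<bar>emp_copula Xs Ys n \<omega> u v - A u v\<bar> \<le> 3 * \<delta> + 2 / real n"
  unfolding emp_copula_def
proof (rule grid_bilinear_near[OF n])
  fix a b assume a: "a \<le> n" and b: "b \<le> n" and au: "\<bar>real a / real n - u\<bar> \<le> 1 / real n"
    and bv: "\<bar>real b / real n - v\<bar> \<le> 1 / real n"
  obtain x where x: "count_le (\<lambda>i. Xs i \<omega>) n x = a" using count_le_surj[OF injX a] by blast
  obtain y where y: "count_le (\<lambda>i. Ys i \<omega>) n y = b" using count_le_surj[OF injY b] by blast
  have Sab: "emp_subcopula Xs Ys n \<omega> a b = emp_joint Xs Ys n \<omega> x y"
    using emp_joint_eq_emp_subcopula[where Xs = Xs and Ys = Ys and \<omega> = \<omega> and n = n, OF injX injY] x y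
    by simp
  have ab: "emp_df Xs n \<omega> x = real a / real n" "emp_df Ys n \<omega> y = real b / real n"
    using x y by (simp_all add: emp_df_eq_count_le)
  have ab01: "real a / real n \<in> {0..1}" "real b / real n \<in> {0..1}" using a b n by (auto simp: field_simps)
  have "\<bar>A (F x) (G y) - A (real a / real n) (real b / real n)\<bar> \<le> \<bar>F x - real a / real n\<bar> + \<bar>G y - real b / real n\<bar>"
    by (rule copula_Lipschitz[OF C F01 ab01(1) G01 ab01(2)])
  then have near_FG: "\<bar>A (F x) (G y) - A (real a / real n) (real b / real n)\<bar> \<le> 2 * \<delta>"
    using dF[of x] dG[of y] unfolding ab by (simp add: abs_minus_commute)
  have "\<bar>A (real a / real n) (real b / real n) - A u v\<bar> \<le> \<bar>real a / real n - u\<bar> + \<bar>real b / real n - v\<bar>"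
    by (rule copula_Lipschitz[OF C ab01(1) u ab01(2) v])
  then have near_uv: "\<bar>A (real a / real n) (real b / real n) - A u v\<bar> \<le> 2 / real n" using au bv by simp
  have "\<bar>emp_subcopula Xs Ys n \<omega> a b - A (F x) (G y)\<bar> \<le> \<delta>" using dH[of x y] unfolding Sab HA .
  with near_FG near_uv show "\<bar>emp_subcopula Xs Ys n \<omega> a b - A u v\<bar> \<le> 3 * \<delta> + 2 / real n" by linarith
qed (use u v in auto)

text \<open>Bilinear interpolation turns the indicator steps of the empirical subcopula into ramps.\<close>

definition ramp :: "real \<Rightarrow> real" where "ramp t = max 0 (min 1 t)"

lemma ramp_mono: "a \<le> b \<Longrightarrow> ramp a \<le> ramp b"
  unfolding ramp_def by auto

lemma interpolate_indicator_eq_ramp: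
  assumes "0 \<le> s" "s \<le> 1"
  shows "(1 - s) * (if r \<le> i then 1 else 0) + s * (if r \<le> Suc i then 1 else 0) = ramp (real i + s - real r + 1)"
proof -
  consider "r \<le> i" | "r = Suc i" | "r > Suc i" by linarith
  then show ?thesis
    by cases (use assms in \<open>auto simp: ramp_def\<close>)
qed

lemma emp_subcopula_eq_sum:
  fixes Xs Ys :: "nat \<Rightarrow> 'a \<Rightarrow> real"
  assumes injX: "inj_on (\<lambda>i. Xs i \<omega>) {..<n}" and injY: "inj_on (\<lambda>i. Ys i \<omega>) {..<n}"
    and "a \<le> n" "b \<le> n"
  shows "emp_subcopula Xs Ys n \<omega> a b = (\<Sum>k<n. (if sample_rank (\<lambda>i. Xs i \<omega>) n k \<le> a then 1 else 0)
    * (if sample_rank (\<lambda>i. Ys i \<omega>) n k \<le> b then 1 else 0)) / real n"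
proof -
  let ?rX = "sample_rank (\<lambda>i. Xs i \<omega>) n" and ?rY = "sample_rank (\<lambda>i. Ys i \<omega>) n"
  have "(\<Sum>k<n. (if ?rX k \<le> a then 1 else 0) * (if ?rY k \<le> b then 1 else 0))
      = (\<Sum>k<n. if ?rX k \<le> a \<and> ?rY k \<le> b then 1 else (0::real))"
    by (intro sum.cong) auto
  also have "\<dots> = real (card {k. k < n \<and> ?rX k \<le> a \<and> ?rY k \<le> b})"
    by (simp add: sum.If_cases lessThan_def Collect_conj_eq[symmetric])
  finally show ?thesis
    using assms by (simp add: emp_subcopula_eq_rank_subcopula[where Xs = Xs and Ys = Ys and \<omega> = \<omega> and n = n,
        OF injX injY] rank_subcopula_def)
qed

lemma emp_copula_eq_sum_ramps:
  fixes Xs Ys :: "nat \<Rightarrow> 'a \<Rightarrow> real"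
  assumes injX: "inj_on (\<lambda>i. Xs i \<omega>) {..<n}" and injY: "inj_on (\<lambda>i. Ys i \<omega>) {..<n}" and n: "1 \<le> n"
    and u: "0 \<le> u" "u \<le> 1" and v: "0 \<le> v" "v \<le> 1"
  defines "rX \<equiv> sample_rank (\<lambda>i. Xs i \<omega>) n" and "rY \<equiv> sample_rank (\<lambda>i. Ys i \<omega>) n"
  shows "emp_copula Xs Ys n \<omega> u v
    = (\<Sum>k<n. ramp (real n * u - real (rX k) + 1) * ramp (real n * v - real (rY k) + 1)) / real n"
proof -
  define i where "i = min (nat \<lfloor>real n * u\<rfloor>) (n - 1)"
  define j where "j = min (nat \<lfloor>real n * v\<rfloor>) (n - 1)"
  define s where "s = real n * u - real i"
  define t where "t = real n * v - real j"
  have fi: "i \<le> n - 1" "0 \<le> s" "s \<le> 1" using grid_bilinear_index_bounds[OF n u] unfolding i_def s_def by auto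
  have fj: "j \<le> n - 1" "0 \<le> t" "t \<le> 1" using grid_bilinear_index_bounds[OF n v] unfolding j_def t_def by auto
  let ?I = "\<lambda>r a. (if r \<le> a then 1 else 0::real)"
  note S = emp_subcopula_eq_sum[where Xs = Xs and Ys = Ys and \<omega> = \<omega> and n = n, OF injX injY,
      folded rX_def rY_def]
  have "emp_copula Xs Ys n \<omega> u v = (1 - s) * (1 - t) * emp_subcopula Xs Ys n \<omega> i j
      + s * (1 - t) * emp_subcopula Xs Ys n \<omega> (Suc i) j + (1 - s) * t * emp_subcopula Xs Ys n \<omega> i (Suc j)
      + s * t * emp_subcopula Xs Ys n \<omega> (Suc i) (Suc j)"
    unfolding emp_copula_def grid_bilinear_def Let_def i_def[symmetric] j_def[symmetric] s_def[symmetric] t_def[symmetric]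
    by simp
  also have "\<dots> = (\<Sum>k<n. ((1 - s) * ?I (rX k) i + s * ?I (rX k) (Suc i))
      * ((1 - t) * ?I (rY k) j + t * ?I (rY k) (Suc j))) / real n"
  proof -
    have le: "i \<le> n" "Suc i \<le> n" "j \<le> n" "Suc j \<le> n" using fi fj n by auto
    have "(\<Sum>k<n. ((1 - s) * ?I (rX k) i + s * ?I (rX k) (Suc i)) * ((1 - t) * ?I (rY k) j + t * ?I (rY k) (Suc j)))
      = (\<Sum>k<n. (1 - s) * (1 - t) * (?I (rX k) i * ?I (rY k) j) + s * (1 - t) * (?I (rX k) (Suc i) * ?I (rY k) j)
           + (1 - s) * t * (?I (rX k) i * ?I (rY k) (Suc j)) + s * t * (?I (rX k) (Suc i) * ?I (rY k) (Suc j)))"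
      by (intro sum.cong refl) (simp add: algebra_simps)
    also have "\<dots> = (1 - s) * (1 - t) * (\<Sum>k<n. ?I (rX k) i * ?I (rY k) j)
        + s * (1 - t) * (\<Sum>k<n. ?I (rX k) (Suc i) * ?I (rY k) j)
        + (1 - s) * t * (\<Sum>k<n. ?I (rX k) i * ?I (rY k) (Suc j))
        + s * t * (\<Sum>k<n. ?I (rX k) (Suc i) * ?I (rY k) (Suc j))"
      by (simp only: sum.distrib sum_distrib_left)
    finally show ?thesis
      unfolding S[OF le(1) le(3)] S[OF le(2) le(3)] S[OF le(1) le(4)] S[OF le(2) le(4)]
      by (simp add: add_divide_distrib)
  qed
  also have "\<dots> = (\<Sum>k<n. ramp (real n * u - real (rX k) + 1) * ramp (real n * v - real (rY k) + 1)) / real n"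
    using interpolate_indicator_eq_ramp[OF fi(2,3)] interpolate_indicator_eq_ramp[OF fj(2,3)]
    unfolding s_def t_def by simp
  finally show ?thesis .
qed

lemma emp_copula_2_increasing:
  fixes Xs Ys :: "nat \<Rightarrow> 'a \<Rightarrow> real"
  assumes injX: "inj_on (\<lambda>i. Xs i \<omega>) {..<n}" and injY: "inj_on (\<lambda>i. Ys i \<omega>) {..<n}" and n: "1 \<le> n"
    and "0 \<le> a" "a \<le> b" "b \<le> 1" "0 \<le> w" "w \<le> w'" "w' \<le> 1"
  shows "emp_copula Xs Ys n \<omega> b w' - emp_copula Xs Ys n \<omega> a w' - emp_copula Xs Ys n \<omega> b w
    + emp_copula Xs Ys n \<omega> a w \<ge> 0"
proof -
  define rX where "rX k = real (sample_rank (\<lambda>i. Xs i \<omega>) n k)" for k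
  define rY where "rY k = real (sample_rank (\<lambda>i. Ys i \<omega>) n k)" for k
  have e: "emp_copula Xs Ys n \<omega> x y = (\<Sum>k<n. ramp (real n * x - rX k + 1) * ramp (real n * y - rY k + 1)) / real n"
    if "0 \<le> x" "x \<le> 1" "0 \<le> y" "y \<le> 1" for x y
    unfolding rX_def rY_def
    by (rule emp_copula_eq_sum_ramps[where Xs = Xs and Ys = Ys and \<omega> = \<omega> and n = n, OF injX injY n that])
  have "emp_copula Xs Ys n \<omega> b w' - emp_copula Xs Ys n \<omega> a w' - emp_copula Xs Ys n \<omega> b w + emp_copula Xs Ys n \<omega> a w
     = (\<Sum>k<n. (ramp (real n * b - rX k + 1) - ramp (real n * a - rX k + 1))
         * (ramp (real n * w' - rY k + 1) - ramp (real n * w - rY k + 1))) / real n"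
    using assms by (simp add: e diff_divide_distrib[symmetric] add_divide_distrib[symmetric]
        sum_subtractf[symmetric] sum.distrib[symmetric] algebra_simps)
  also have "\<dots> \<ge> 0"
  proof -
    have "real n * a \<le> real n * b" "real n * w \<le> real n * w'" using assms by (auto intro: mult_left_mono)
    then show ?thesis
      by (intro divide_nonneg_nonneg sum_nonneg mult_nonneg_nonneg) (auto intro!: ramp_mono)
  qed
  finally show ?thesis .
qed

lemma emp_copula_margins:
  fixes Xs Ys :: "nat \<Rightarrow> 'a \<Rightarrow> real"
  assumes injX: "inj_on (\<lambda>i. Xs i \<omega>) {..<n}" and injY: "inj_on (\<lambda>i. Ys i \<omega>) {..<n}" and n: "1 \<le> n"
    and u: "0 \<le> u" "u \<le> 1"
  shows "emp_copula Xs Ys n \<omega> u 1 = u" "emp_copula Xs Ys n \<omega> u 0 = 0"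
proof -
  let ?S = "emp_subcopula Xs Ys n \<omega>"
  have g: "grid_subcopula n ?S"
    using grid_subcopula_rank_subcopula[OF bij_betw_sample_rank[OF injX] bij_betw_sample_rank[OF injY]]
    by (simp add: emp_subcopula_eq_rank_subcopula[where Xs = Xs and Ys = Ys and \<omega> = \<omega> and n = n, OF injX injY])
  define i where "i = min (nat \<lfloor>real n * u\<rfloor>) (n - 1)"
  define s where "s = real n * u - real i"
  have fi: "i \<le> n - 1" "0 \<le> s" "s \<le> 1" using grid_bilinear_index_bounds[OF n u] unfolding i_def s_def by auto
  have le: "i \<le> n" "Suc i \<le> n" using fi n by auto
  have Sn: "?S a n = real a / real n" "?S a 0 = 0" if "a \<le> n" for a
    using g that unfolding grid_subcopula_def by auto
  have "emp_copula Xs Ys n \<omega> u 1 = (1 - s) * ?S i n + s * ?S (Suc i) n"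
    unfolding emp_copula_def grid_bilinear_def Let_def i_def[symmetric] s_def[symmetric]
    using n by (simp add: of_nat_diff)
  also have "\<dots> = (real i + s) / real n" using le by (simp add: Sn field_simps)
  also have "\<dots> = u" using n unfolding s_def by simp
  finally show "emp_copula Xs Ys n \<omega> u 1 = u" .
  show "emp_copula Xs Ys n \<omega> u 0 = 0"
    unfolding emp_copula_def grid_bilinear_def Let_def i_def[symmetric] s_def[symmetric]
    using le by (simp add: Sn)
qed

lemma emp_rect_mass_nonneg:
  fixes Xs Ys :: "nat \<Rightarrow> 'a \<Rightarrow> real"
  assumes injX: "inj_on (\<lambda>i. Xs i \<omega>) {..<n}" and injY: "inj_on (\<lambda>i. Ys i \<omega>) {..<n}" and n: "1 \<le> n"
    and i: "i \<in> {1..N}" and j: "j \<in> {1..N}"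
  shows "rect_mass (emp_copula Xs Ys n \<omega>) N i j \<ge> 0"
proof -
  have Npos: "real N > 0" using i by auto
  have "0 \<le> (real i - 1) / real N" "(real i - 1) / real N \<le> real i / real N" "real i / real N \<le> 1"
     "0 \<le> (real j - 1) / real N" "(real j - 1) / real N \<le> real j / real N" "real j / real N \<le> 1"
    using i j Npos by (auto simp: field_simps)
  then show ?thesis unfolding rect_mass_def
    using emp_copula_2_increasing[where Xs = Xs and Ys = Ys and \<omega> = \<omega> and n = n, OF injX injY n] by simp
qed

lemma emp_df_bounds: "0 \<le> emp_df Ys n \<omega> y" "emp_df Ys n \<omega> y \<le> 1"
  using count_le_le[of "\<lambda>i. Ys i \<omega>" n y]
  by (auto simp: emp_df_eq_count_le divide_le_eq_1)

lemma emp_df_mono: "y \<le> y' \<Longrightarrow> emp_df Ys n \<omega> y \<le> emp_df Ys n \<omega> y'"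
  unfolding emp_df_eq_count_le by (intro divide_right_mono) (auto intro: count_le_mono)

lemma emp_df_eventually_at_right:
  fixes Ys :: "nat \<Rightarrow> 'a \<Rightarrow> real"
  shows "\<forall>\<^sub>F y' in at_right y. emp_df Ys n \<omega> y' = emp_df Ys n \<omega> y"
proof -
  define b where "b = Min (insert (y + 1) ((\<lambda>i. Ys i \<omega>) ` {i. i < n \<and> Ys i \<omega> > y}))"
  have b: "y < b" unfolding b_def by auto
  have "{i. i < n \<and> Ys i \<omega> \<le> y'} = {i. i < n \<and> Ys i \<omega> \<le> y}" if "y < y'" "y' < b" for y'
  proof (intro equalityI subsetI)
    fix i assume i: "i \<in> {i. i < n \<and> Ys i \<omega> \<le> y'}"
    have "b \<le> Ys i \<omega>" if "y < Ys i \<omega>" unfolding b_def using i that by (intro Min_le) auto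
    then show "i \<in> {i. i < n \<and> Ys i \<omega> \<le> y}" using i \<open>y' < b\<close> by force
  qed (use that in auto)
  then show ?thesis
    unfolding eventually_at_right[OF b] emp_df_def using b by (intro exI[of _ b]) auto
qed

lemma emp_df_eventually_at_bot:
  fixes Ys :: "nat \<Rightarrow> 'a \<Rightarrow> real"
  shows "\<forall>\<^sub>F y in at_bot. emp_df Ys n \<omega> y = 0"
proof -
  define m where "m = Min (insert 0 ((\<lambda>i. Ys i \<omega>) ` {..<n}))"
  have "{i. i < n \<and> Ys i \<omega> \<le> y} = {}" if "y < m" for y
    using that Min_le[of "insert 0 ((\<lambda>i. Ys i \<omega>) ` {..<n})"] unfolding m_def by force
  then show ?thesis unfolding eventually_at_bot_dense emp_df_def by auto
qed

lemma emp_df_eventually_at_top: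
  fixes Ys :: "nat \<Rightarrow> 'a \<Rightarrow> real"
  assumes n: "1 \<le> n"
  shows "\<forall>\<^sub>F y in at_top. emp_df Ys n \<omega> y = 1"
proof -
  define m where "m = Max (insert 0 ((\<lambda>i. Ys i \<omega>) ` {..<n}))"
  have "{i. i < n \<and> Ys i \<omega> \<le> y} = {..<n}" if "m \<le> y" for y
    using that Max_ge[of "insert 0 ((\<lambda>i. Ys i \<omega>) ` {..<n})"] unfolding m_def by force
  then show ?thesis unfolding eventually_at_top_linorder emp_df_def using n by (intro exI[of _ m]) auto
qed

lemma distribution_function_emp_cb_kernel_cdf:
  fixes Xs Ys :: "nat \<Rightarrow> 'a \<Rightarrow> real"
  assumes injX: "inj_on (\<lambda>i. Xs i \<omega>) {..<n}" and injY: "inj_on (\<lambda>i. Ys i \<omega>) {..<n}" and n: "1 \<le> n"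
    and N: "1 \<le> N" and u: "0 \<le> u" "u \<le> 1"
  shows "distribution_function (\<lambda>y. cb_kernel_cdf N (emp_copula Xs Ys n \<omega>) u (emp_df Ys n \<omega> y))"
  unfolding distribution_function_def
proof (intro conjI allI)
  let ?C = "\<lambda>y. cb_kernel_cdf N (emp_copula Xs Ys n \<omega>) u (emp_df Ys n \<omega> y)"
  have mass: "\<And>i j. i \<in> {1..N} \<Longrightarrow> j \<in> {1..N} \<Longrightarrow> rect_mass (emp_copula Xs Ys n \<omega>) N i j \<ge> 0"
    by (rule emp_rect_mass_nonneg[where Xs = Xs and Ys = Ys and \<omega> = \<omega> and n = n, OF injX injY n])
  show "mono ?C"
    unfolding mono_def using emp_df_bounds by (intro allI impI cb_kernel_cdf_mono[OF mass N] emp_df_mono) auto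
  show "continuous (at_right a) ?C" for a
  proof -
    have "\<forall>\<^sub>F y in at_right a. ?C y = ?C a"
      using emp_df_eventually_at_right[where y = a and Ys = Ys and n = n and \<omega> = \<omega>] by eventually_elim simp
    then show ?thesis unfolding continuous_within by (rule tendsto_eventually)
  qed
  show "(?C \<longlongrightarrow> 0) at_bot"
    using emp_df_eventually_at_bot[of Ys n \<omega>]
    by (intro tendsto_eventually) (auto simp: cb_kernel_cdf_zero[OF N] elim: eventually_mono)
  have "cb_kernel_cdf N (emp_copula Xs Ys n \<omega>) u 1 = 1"
    using emp_copula_margins[where Xs = Xs and Ys = Ys and \<omega> = \<omega> and n = n, OF injX injY n]
    by (intro cb_kernel_cdf_one[OF N u]) auto
  then show "(?C \<longlongrightarrow> 1) at_top"
    using emp_df_eventually_at_top[OF n, of Ys \<omega>]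
    by (intro tendsto_eventually) (auto elim: eventually_mono)
qed

section \<open>Sampling: no ties and uniform rates of convergence\<close>

definition quantile :: "(real \<Rightarrow> real) \<Rightarrow> real \<Rightarrow> real" where
  "quantile F p = Inf {a. p \<le> F a}"

text \<open>Half-lines of probability k/m, k = 0, ..., m, for a continuous distribution function F.\<close>

definition quantile_grid :: "(real \<Rightarrow> real) \<Rightarrow> nat \<Rightarrow> nat \<Rightarrow> real set" where
  "quantile_grid F m k = (if k = 0 then {} else if m \<le> k then UNIV else {..quantile F (real k / real m)})"

lemma quantile_grid_borel[measurable]: "quantile_grid F m k \<in> sets borel"
  unfolding quantile_grid_def by auto

context
  fixes P :: "real measure"
  assumes P: "real_distribution P" and cont: "\<And>x. isCont (cdf P) x"
begin

interpretation real_distribution P by (rule P)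

lemma cdf_quantile:
  assumes p: "0 < p" "p < 1"
  shows "cdf P (quantile (cdf P) p) = p" and "\<And>a. p \<le> cdf P a \<longleftrightarrow> quantile (cdf P) p \<le> a"
proof -
  define S where "S = {a. p \<le> cdf P a}"
  obtain a where "p < cdf P a"
    using order_tendstoD(1)[OF cdf_lim_at_top_prob p(2)] unfolding eventually_at_top_linorder by auto
  then have "a \<in> S" unfolding S_def by simp
  then have ne: "S \<noteq> {}" by auto
  obtain b where b: "\<And>a. a \<le> b \<Longrightarrow> cdf P a < p"
    using order_tendstoD(2)[OF cdf_lim_at_bot p(1)] unfolding eventually_at_bot_linorder by auto
  have bdd: "bdd_below S"
  proof (rule bdd_belowI)
    fix x assume "x \<in> S" then show "b \<le> x" using b[of x] by (cases "x \<le> b") (auto simp: S_def)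
  qed
  have "closed S" unfolding S_def
    by (rule closed_Collect_le[OF continuous_on_const]) (simp add: continuous_at_imp_continuous_on cont)
  then have qS: "quantile (cdf P) p \<in> S" unfolding quantile_def S_def[symmetric] by (rule closed_contains_Inf[OF ne bdd])
  have below: "cdf P a < p" if "a < quantile (cdf P) p" for a
    using cInf_lower[OF _ bdd, of a] that unfolding quantile_def S_def[symmetric] by (force simp: S_def)
  have "(cdf P \<longlongrightarrow> cdf P (quantile (cdf P) p)) (at_left (quantile (cdf P) p))"
    using cont[of "quantile (cdf P) p"] unfolding isCont_def filterlim_at_split by simp
  moreover have "\<forall>\<^sub>F a in at_left (quantile (cdf P) p). cdf P a \<le> p"
    using below by (auto simp: eventually_at_left_field intro!: exI[of _ "quantile (cdf P) p - 1"] less_imp_le)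
  ultimately have "cdf P (quantile (cdf P) p) \<le> p" by (rule tendsto_upperbound) simp
  then show "cdf P (quantile (cdf P) p) = p" using qS unfolding S_def by simp
  show "p \<le> cdf P a \<longleftrightarrow> quantile (cdf P) p \<le> a" for a
    using cInf_lower[OF _ bdd, of a] qS cdf_nondecreasing[of "quantile (cdf P) p" a]
    unfolding quantile_def S_def[symmetric] by (auto simp: S_def)
qed

lemma quantile_grid_mono:
  assumes "k \<le> k'"
  shows "quantile_grid (cdf P) m k \<subseteq> quantile_grid (cdf P) m k'"
proof (cases "k = 0 \<or> m \<le> k'")
  case False
  then have k: "0 < k" "k \<le> k'" "k' < m" using assms by auto
  then have "real k / real m \<le> real k' / real m" "0 < real k / real m" "real k / real m < 1"
    "0 < real k' / real m" "real k' / real m < 1"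
    by (auto simp: field_simps divide_right_mono)
  then have "real k / real m \<le> cdf P (quantile (cdf P) (real k' / real m))"
    using cdf_quantile(1)[of "real k' / real m"] by simp
  then have "quantile (cdf P) (real k / real m) \<le> quantile (cdf P) (real k' / real m)"
    using cdf_quantile(2)[of "real k / real m"] k by (simp add: field_simps)
  then show ?thesis using k unfolding quantile_grid_def by auto
qed (use assms in \<open>auto simp: quantile_grid_def\<close>)

lemma quantile_grid_sandwich:
  assumes m: "1 \<le> m"
  shows "\<exists>k<m. quantile_grid (cdf P) m k \<subseteq> {..a} \<and> {..a} \<subseteq> quantile_grid (cdf P) m (Suc k)"
proof -
  define k where "k = min (m - 1) (nat \<lfloor>real m * cdf P a\<rfloor>)"
  have km: "k < m" using m unfolding k_def by auto
  have "quantile_grid (cdf P) m k \<subseteq> {..a}"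
  proof (cases "k = 0")
    case False
    have "real k \<le> real m * cdf P a" unfolding k_def using False k_def by linarith
    then have "real k / real m \<le> cdf P a" "0 < real k / real m" "real k / real m < 1"
      using m False km by (auto simp: field_simps)
    then show ?thesis using False km cdf_quantile unfolding quantile_grid_def by auto
  qed (simp add: quantile_grid_def)
  moreover have "{..a} \<subseteq> quantile_grid (cdf P) m (Suc k)"
  proof (cases "m \<le> Suc k")
    case False
    then have "k = nat \<lfloor>real m * cdf P a\<rfloor>" unfolding k_def by auto
    then have "real m * cdf P a < real (Suc k)" by linarith
    then have "cdf P a < real (Suc k) / real m" "0 < real (Suc k) / real m" "real (Suc k) / real m < 1"
      using m False by (auto simp: field_simps)
    then have "\<not> quantile (cdf P) (real (Suc k) / real m) \<le> a"
      using cdf_quantile(2)[of "real (Suc k) / real m" a] by linarith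
    then show ?thesis using False unfolding quantile_grid_def by auto
  qed (simp add: quantile_grid_def)
  ultimately show ?thesis using km by blast
qed

lemma measure_quantile_grid_step:
  assumes m: "1 \<le> m" and k: "k < m"
  shows "measure P (quantile_grid (cdf P) m (Suc k) - quantile_grid (cdf P) m k) = 1 / real m"
proof -
  have grid: "measure P (quantile_grid (cdf P) m k) = real k / real m" if km: "k \<le> m" for k
  proof -
    consider "k = 0" | "k = m" | "0 < k" "k < m" using km by linarith
    then show ?thesis
    proof cases
      case 3
      then have "0 < real k / real m" "real k / real m < 1" by (auto simp: field_simps)
      then show ?thesis using 3 cdf_quantile(1) by (simp add: quantile_grid_def cdf_def)
    qed (use m prob_space in \<open>simp_all add: quantile_grid_def\<close>)
  qed
  have "measure P (quantile_grid (cdf P) m (Suc k) - quantile_grid (cdf P) m k)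
      = measure P (quantile_grid (cdf P) m (Suc k)) - measure P (quantile_grid (cdf P) m k)"
    by (rule finite_measure_Diff) (use quantile_grid_mono[of k "Suc k" m] in auto)
  also have "\<dots> = 1 / real m" using grid[of "Suc k"] grid[of k] k by (simp add: diff_divide_distrib[symmetric])
  finally show ?thesis .
qed

end

text \<open>By Fubini, P(Z1 = Z2) is the integral of the atoms P(Z2 = z), which vanish, against the law of Z1.\<close>

lemma (in prob_space) prob_eq_zero_if_continuous_indep:
  assumes indep: "indep_var borel Z1 borel Z2" and cont: "\<And>x. isCont (cdf (distr M borel Z2)) x"
  shows "prob {\<omega> \<in> space M. Z1 \<omega> = Z2 \<omega>} = 0"
proof -
  have rv: "random_variable borel Z1" "random_variable borel Z2"
    and prod: "distr M borel Z1 \<Otimes>\<^sub>M distr M borel Z2 = distr M (borel \<Otimes>\<^sub>M borel) (\<lambda>\<omega>. (Z1 \<omega>, Z2 \<omega>))"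
    using indep unfolding indep_var_distribution_eq by auto
  interpret Z2: real_distribution "distr M borel Z2" using rv(2) by simp
  let ?D = "{p :: real \<times> real. fst p = snd p}"
  have "Measurable.pred (borel \<Otimes>\<^sub>M borel) (\<lambda>p::real \<times> real. fst p = snd p)" by measurable
  then have D: "?D \<in> sets (borel \<Otimes>\<^sub>M borel)" by (simp add: pred_def space_pair_measure)
  have "emeasure (distr M borel Z1 \<Otimes>\<^sub>M distr M borel Z2) ?D
      = (\<integral>\<^sup>+ x. emeasure (distr M borel Z2) (Pair x -` ?D) \<partial>distr M borel Z1)"
  proof (rule Z2.emeasure_pair_measure_alt)
    have "sets (distr M borel Z1 \<Otimes>\<^sub>M distr M borel Z2) = sets (borel \<Otimes>\<^sub>M borel)"
      by (rule sets_pair_measure_cong) simp_all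
    then show "?D \<in> sets (distr M borel Z1 \<Otimes>\<^sub>M distr M borel Z2)" using D by simp
  qed
  also have "\<dots> = (\<integral>\<^sup>+ x. emeasure (distr M borel Z2) {x} \<partial>distr M borel Z1)"
    by (intro nn_integral_cong arg_cong[where f = "emeasure (distr M borel Z2)"]) auto
  also have "\<dots> = 0"
    using Z2.isCont_cdf cont by (simp add: Z2.emeasure_eq_measure)
  finally have "measure (distr M (borel \<Otimes>\<^sub>M borel) (\<lambda>\<omega>. (Z1 \<omega>, Z2 \<omega>))) ?D = 0"
    unfolding prod[symmetric] by (simp add: measure_def)
  moreover have "(\<lambda>\<omega>. (Z1 \<omega>, Z2 \<omega>)) -` ?D \<inter> space M = {\<omega> \<in> space M. Z1 \<omega> = Z2 \<omega>}" by auto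
  moreover have "(\<lambda>\<omega>. (Z1 \<omega>, Z2 \<omega>)) \<in> M \<rightarrow>\<^sub>M borel \<Otimes>\<^sub>M borel" using rv by measurable
  ultimately show ?thesis using measure_distr[OF _ D, of "\<lambda>\<omega>. (Z1 \<omega>, Z2 \<omega>)" M] by simp
qed

lemma (in prob_space) indep_var_of_indep_vars:
  assumes indep: "indep_vars (\<lambda>_. N) Z UNIV" and ij: "i \<noteq> j"
  shows "indep_var N (Z i) N (Z j)"
proof -
  have rv: "random_variable N (Z k)" for k using indep unfolding indep_vars_def2 by auto
  have ind: "indep_sets (\<lambda>k. {Z k -` A \<inter> space M | A. A \<in> sets N}) UNIV"
    using indep unfolding indep_vars_def2 by simp
  have "prob (a \<inter> b) = prob a * prob b"
    if a: "a \<in> {Z i -` A \<inter> space M | A. A \<in> sets N}" and b: "b \<in> {Z j -` A \<inter> space M | A. A \<in> sets N}" for a b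
  proof -
    have "prob (\<Inter>k\<in>{i, j}. if k = i then a else b) = (\<Prod>k\<in>{i, j}. prob (if k = i then a else b))"
      by (rule indep_setsD[OF ind]) (use a b ij in auto)
    then show ?thesis using ij by (simp add: Int_commute)
  qed
  moreover have "{Z i -` A \<inter> space M | A. A \<in> sets N} \<subseteq> events" "{Z j -` A \<inter> space M | A. A \<in> sets N} \<subseteq> events"
    using rv by auto
  ultimately have "indep_set {Z i -` A \<inter> space M | A. A \<in> sets N} {Z j -` A \<inter> space M | A. A \<in> sets N}"
    by (simp add: indep_sets2_eq)
  moreover have "(\<lambda>b. {case_bool (Z i) (Z j) b -` A \<inter> space M | A. A \<in> sets (case_bool N N b)})
      = case_bool {Z i -` A \<inter> space M | A. A \<in> sets N} {Z j -` A \<inter> space M | A. A \<in> sets N}"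
    by (rule ext) (simp split: bool.split)
  ultimately show ?thesis
    unfolding indep_var_def indep_vars_def2 indep_set_def using rv by (simp split: bool.split)
qed

definition lower_ray :: "real set \<Rightarrow> bool" where
  "lower_ray S \<longleftrightarrow> (\<exists>a. S = {..a}) \<or> S = UNIV"

lemma lower_ray_borel: "lower_ray S \<Longrightarrow> S \<in> sets borel"
  unfolding lower_ray_def by auto

lemma lower_ray_quantile_grid_sandwich:
  assumes "real_distribution P" "\<And>x. isCont (cdf P) x" and m: "1 \<le> m" and S: "lower_ray S"
  shows "\<exists>k<m. quantile_grid (cdf P) m k \<subseteq> S \<and> S \<subseteq> quantile_grid (cdf P) m (Suc k)"
proof (cases "S = UNIV")
  case True
  then show ?thesis using m by (intro exI[of _ "m - 1"]) (simp add: quantile_grid_def)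
next
  case False
  then obtain a where "S = {..a}" using S unfolding lower_ray_def by blast
  then show ?thesis using quantile_grid_sandwich[OF assms(1,2) m] by blast
qed

locale iid_pairs = prob_space M for M :: "'a measure" +
  fixes X Y :: "'a \<Rightarrow> real" and Xs Ys :: "nat \<Rightarrow> 'a \<Rightarrow> real"
  assumes X[measurable]: "X \<in> borel_measurable M" and Y[measurable]: "Y \<in> borel_measurable M"
    and Xs[measurable]: "\<And>i. Xs i \<in> borel_measurable M" and Ys[measurable]: "\<And>i. Ys i \<in> borel_measurable M"
    and indep: "indep_vars (\<lambda>_. borel) (\<lambda>i \<omega>. (Xs i \<omega>, Ys i \<omega>)) UNIV"
    and same_distr: "\<And>i. distr M borel (\<lambda>\<omega>. (Xs i \<omega>, Ys i \<omega>)) = distr M borel (\<lambda>\<omega>. (X \<omega>, Y \<omega>))"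
begin

definition joint_prob :: "real set \<Rightarrow> real set \<Rightarrow> real" where
  "joint_prob Sx Sy = prob {\<omega>\<in>space M. X \<omega> \<in> Sx \<and> Y \<omega> \<in> Sy}"

definition emp_prob :: "nat \<Rightarrow> 'a \<Rightarrow> real set \<Rightarrow> real set \<Rightarrow> real" where
  "emp_prob n \<omega> Sx Sy = real (card {i. i < n \<and> Xs i \<omega> \<in> Sx \<and> Ys i \<omega> \<in> Sy}) / real n"

lemma emp_prob_eq_sum: "emp_prob n \<omega> Sx Sy = (\<Sum>i<n. indicator (Sx \<times> Sy) (Xs i \<omega>, Ys i \<omega>)) / real n"
proof -
  have "{i. i < n \<and> Xs i \<omega> \<in> Sx \<and> Ys i \<omega> \<in> Sy} = {..<n} \<inter> {i. (Xs i \<omega>, Ys i \<omega>) \<in> Sx \<times> Sy}" by auto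
  then show ?thesis by (simp add: emp_prob_def indicator_def sum.If_cases)
qed

lemma emp_prob_measurable[measurable]:
  assumes "Sx \<in> sets borel" "Sy \<in> sets borel"
  shows "(\<lambda>\<omega>. emp_prob n \<omega> Sx Sy) \<in> borel_measurable M"
proof -
  have [measurable]: "Sx \<times> Sy \<in> sets borel" using assms by (simp add: borel_prod[symmetric])
  show ?thesis unfolding emp_prob_eq_sum by measurable
qed

lemma joint_prob_eq_measure_distr:
  assumes "S \<in> sets borel"
  shows "joint_prob S UNIV = measure (distr M borel X) S" "joint_prob UNIV S = measure (distr M borel Y) S"
proof -
  have "X -` S \<inter> space M = {\<omega>\<in>space M. X \<omega> \<in> S \<and> Y \<omega> \<in> UNIV}"
    "Y -` S \<inter> space M = {\<omega>\<in>space M. X \<omega> \<in> UNIV \<and> Y \<omega> \<in> S}" by auto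
  then show "joint_prob S UNIV = measure (distr M borel X) S" "joint_prob UNIV S = measure (distr M borel Y) S"
    unfolding joint_prob_def using assms by (simp_all only: measure_distr X Y)
qed

lemma prob_emp_prob_deviation_ge:
  assumes Sx: "Sx \<in> sets borel" and Sy: "Sy \<in> sets borel" and n: "1 \<le> n" and t: "0 \<le> t"
  shows "prob {\<omega>\<in>space M. t \<le> \<bar>emp_prob n \<omega> Sx Sy - joint_prob Sx Sy\<bar>} \<le> 2 * exp (-2 * real n * t\<^sup>2)"
proof -
  have T[measurable]: "Sx \<times> Sy \<in> sets borel" using Sx Sy by (simp add: borel_prod[symmetric])
  define V where "V i \<omega> = (indicator (Sx \<times> Sy) (Xs i \<omega>, Ys i \<omega>) :: real)" for i \<omega>
  define V0 where "V0 \<omega> = (indicator (Sx \<times> Sy) (X \<omega>, Y \<omega>) :: real)" for \<omega>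
  have [measurable]: "V i \<in> borel_measurable M" "V0 \<in> borel_measurable M" for i
    unfolding V_def V0_def by measurable
  have indV: "indep_vars (\<lambda>_. borel) V {..<n}"
  proof -
    have "indep_vars (\<lambda>_. borel) (\<lambda>i \<omega>. indicator (Sx \<times> Sy) (Xs i \<omega>, Ys i \<omega>) :: real) UNIV"
      by (rule indep_vars_compose2[OF indep]) measurable
    then show ?thesis unfolding V_def by (rule indep_vars_subset) auto
  qed
  have dV: "distr M borel (V i) = distr M borel V0" for i
  proof -
    have "distr M borel (V i) = distr (distr M borel (\<lambda>\<omega>. (Xs i \<omega>, Ys i \<omega>))) borel (indicator (Sx \<times> Sy))"
      unfolding V_def by (subst distr_distr) (auto simp: comp_def)
    also have "\<dots> = distr M borel V0"
      unfolding same_distr V0_def by (subst distr_distr) (auto simp: comp_def)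
    finally show ?thesis .
  qed
  interpret H: Hoeffding_ineq_iid M "{..<n}" V V0 0 1 "expectation V0"
    by unfold_locales (auto simp: indV dV V0_def indicator_def)
  have "expectation V0 = expectation (indicator {\<omega>\<in>space M. X \<omega> \<in> Sx \<and> Y \<omega> \<in> Sy})"
    by (intro Bochner_Integration.integral_cong) (auto simp: V0_def indicator_def)
  also have "\<dots> = joint_prob Sx Sy"
  proof -
    have "{\<omega>\<in>space M. X \<omega> \<in> Sx \<and> Y \<omega> \<in> Sy} \<in> events" using Sx Sy by measurable
    then show ?thesis unfolding joint_prob_def by simp
  qed
  finally have EV0: "expectation V0 = joint_prob Sx Sy" .
  have "prob {\<omega>\<in>space M. \<bar>(\<Sum>i\<in>{..<n}. V i \<omega>) / real (card {..<n}) - expectation V0\<bar> \<ge> t}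
      \<le> 2 * exp (-2 * real (card {..<n}) * t\<^sup>2 / (1 - 0)\<^sup>2)"
    using n by (intro H.Hoeffding_ineq_abs_ge' t) (auto simp: lessThan_empty_iff)
  then show ?thesis by (simp add: EV0 emp_prob_eq_sum V_def)
qed
lemma joint_prob_mono:
  "S \<subseteq> S' \<Longrightarrow> T \<subseteq> T' \<Longrightarrow> S' \<in> sets borel \<Longrightarrow> T' \<in> sets borel \<Longrightarrow> joint_prob S T \<le> joint_prob S' T'"
  unfolding joint_prob_def by (intro finite_measure_mono) (auto, measurable)

lemma emp_prob_mono: "S \<subseteq> S' \<Longrightarrow> T \<subseteq> T' \<Longrightarrow> emp_prob n \<omega> S T \<le> emp_prob n \<omega> S' T'"
  unfolding emp_prob_def by (intro divide_right_mono of_nat_mono card_mono) auto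

lemma joint_prob_diff_le:
  assumes "S \<subseteq> S'" "T \<subseteq> T'" and [measurable]: "S \<in> sets borel" "S' \<in> sets borel" "T \<in> sets borel" "T' \<in> sets borel"
  shows "joint_prob S' T' - joint_prob S T \<le> joint_prob (S' - S) UNIV + joint_prob UNIV (T' - T)"
proof -
  let ?E = "\<lambda>S T. {\<omega>\<in>space M. X \<omega> \<in> S \<and> Y \<omega> \<in> T}"
  have "joint_prob S' T' \<le> prob (?E S T \<union> (?E (S' - S) UNIV \<union> ?E UNIV (T' - T)))"
    unfolding joint_prob_def using assms by (intro finite_measure_mono) (auto, measurable)
  also have "\<dots> \<le> joint_prob S T + (joint_prob (S' - S) UNIV + joint_prob UNIV (T' - T))"
    unfolding joint_prob_def by (intro order_trans[OF measure_Un_le] add_left_mono measure_Un_le) measurable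
  finally show ?thesis by simp
qed

lemma emp_prob_sandwich:
  assumes sub: "Gx \<subseteq> Sx" "Sx \<subseteq> Gx'" "Gy \<subseteq> Sy" "Sy \<subseteq> Gy'"
    and meas: "Gx \<in> sets borel" "Sx \<in> sets borel" "Gx' \<in> sets borel" "Gy \<in> sets borel" "Sy \<in> sets borel" "Gy' \<in> sets borel"
    and dev: "\<bar>emp_prob n \<omega> Gx Gy - joint_prob Gx Gy\<bar> \<le> t" "\<bar>emp_prob n \<omega> Gx' Gy' - joint_prob Gx' Gy'\<bar> \<le> t"
    and px: "joint_prob (Gx' - Gx) UNIV \<le> d" and py: "joint_prob UNIV (Gy' - Gy) \<le> d"
  shows "\<bar>emp_prob n \<omega> Sx Sy - joint_prob Sx Sy\<bar> \<le> t + 2 * d"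
proof -
  have Dx: "Gx' - Gx \<in> sets borel" and Dy: "Gy' - Gy \<in> sets borel" and U: "UNIV \<in> sets borel"
    using meas by auto
  have "joint_prob (Gx' - Sx) UNIV \<le> joint_prob (Gx' - Gx) UNIV" "joint_prob (Sx - Gx) UNIV \<le> joint_prob (Gx' - Gx) UNIV"
    "joint_prob UNIV (Gy' - Sy) \<le> joint_prob UNIV (Gy' - Gy)" "joint_prob UNIV (Sy - Gy) \<le> joint_prob UNIV (Gy' - Gy)"
    using sub by (intro joint_prob_mono Dx Dy U; auto)+
  then have "joint_prob (Gx' - Sx) UNIV \<le> d" "joint_prob (Sx - Gx) UNIV \<le> d"
    "joint_prob UNIV (Gy' - Sy) \<le> d" "joint_prob UNIV (Sy - Gy) \<le> d"
    using px py by linarith+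
  moreover have "joint_prob Gx' Gy' - joint_prob Sx Sy \<le> joint_prob (Gx' - Sx) UNIV + joint_prob UNIV (Gy' - Sy)"
    "joint_prob Sx Sy - joint_prob Gx Gy \<le> joint_prob (Sx - Gx) UNIV + joint_prob UNIV (Sy - Gy)"
    using sub meas by (auto intro!: joint_prob_diff_le)
  moreover have "emp_prob n \<omega> Gx Gy \<le> emp_prob n \<omega> Sx Sy" "emp_prob n \<omega> Sx Sy \<le> emp_prob n \<omega> Gx' Gy'"
    using sub by (auto intro!: emp_prob_mono)
  ultimately show ?thesis using dev by (simp add: abs_le_iff)
qed

lemma distr_Xs_eq: "distr M borel (Xs i) = distr M borel X"
  and distr_Ys_eq: "distr M borel (Ys i) = distr M borel Y"
proof -
  have "distr M borel (Xs i) = distr (distr M borel (\<lambda>\<omega>. (Xs i \<omega>, Ys i \<omega>))) borel fst"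
    by (subst distr_distr) (auto simp: comp_def simp flip: borel_prod)
  moreover have "distr M borel (Ys i) = distr (distr M borel (\<lambda>\<omega>. (Xs i \<omega>, Ys i \<omega>))) borel snd"
    by (subst distr_distr) (auto simp: comp_def simp flip: borel_prod)
  moreover have "distr (distr M borel (\<lambda>\<omega>. (X \<omega>, Y \<omega>))) borel fst = distr M borel X"
    by (subst distr_distr) (auto simp: comp_def simp flip: borel_prod)
  moreover have "distr (distr M borel (\<lambda>\<omega>. (X \<omega>, Y \<omega>))) borel snd = distr M borel Y"
    by (subst distr_distr) (auto simp: comp_def simp flip: borel_prod)
  ultimately show "distr M borel (Xs i) = distr M borel X" "distr M borel (Ys i) = distr M borel Y"
    by (simp_all add: same_distr)
qed

lemma AE_distinct_samples:
  assumes contX: "\<And>x. isCont (cdf (distr M borel X)) x" and contY: "\<And>y. isCont (cdf (distr M borel Y)) y"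
  shows "AE \<omega> in M. \<forall>n. inj_on (\<lambda>i. Xs i \<omega>) {..<n} \<and> inj_on (\<lambda>i. Ys i \<omega>) {..<n}"
proof -
  have "AE \<omega> in M. Xs i \<omega> \<noteq> Xs j \<omega> \<and> Ys i \<omega> \<noteq> Ys j \<omega>" if ij: "i \<noteq> j" for i j
  proof -
    have pair: "indep_var borel (\<lambda>\<omega>. (Xs i \<omega>, Ys i \<omega>)) borel (\<lambda>\<omega>. (Xs j \<omega>, Ys j \<omega>))"
      using indep_var_of_indep_vars[OF indep ij] by simp
    have "indep_var borel (fst \<circ> (\<lambda>\<omega>. (Xs i \<omega>, Ys i \<omega>))) borel (fst \<circ> (\<lambda>\<omega>. (Xs j \<omega>, Ys j \<omega>)))"
      by (rule indep_var_compose[OF pair]) (auto simp flip: borel_prod)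
    moreover have "indep_var borel (snd \<circ> (\<lambda>\<omega>. (Xs i \<omega>, Ys i \<omega>))) borel (snd \<circ> (\<lambda>\<omega>. (Xs j \<omega>, Ys j \<omega>)))"
      by (rule indep_var_compose[OF pair]) (auto simp flip: borel_prod)
    ultimately have "prob {\<omega>\<in>space M. Xs i \<omega> = Xs j \<omega>} = 0" "prob {\<omega>\<in>space M. Ys i \<omega> = Ys j \<omega>} = 0"
      using contX contY by (auto intro!: prob_eq_zero_if_continuous_indep simp: comp_def distr_Xs_eq distr_Ys_eq)
    then have "{\<omega>\<in>space M. Xs i \<omega> = Xs j \<omega>} \<in> null_sets M" "{\<omega>\<in>space M. Ys i \<omega> = Ys j \<omega>} \<in> null_sets M"
      by (auto intro!: null_setsI simp: emeasure_eq_measure)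
    then have "{\<omega>\<in>space M. Xs i \<omega> = Xs j \<omega>} \<union> {\<omega>\<in>space M. Ys i \<omega> = Ys j \<omega>} \<in> null_sets M"
      by (rule null_sets.Un)
    then show ?thesis by (rule AE_I') auto
  qed
  then have "AE \<omega> in M. i \<noteq> j \<longrightarrow> Xs i \<omega> \<noteq> Xs j \<omega> \<and> Ys i \<omega> \<noteq> Ys j \<omega>" for i j
    by (cases "i = j") auto
  then have "AE \<omega> in M. \<forall>i j. i \<noteq> j \<longrightarrow> Xs i \<omega> \<noteq> Xs j \<omega> \<and> Ys i \<omega> \<noteq> Ys j \<omega>"
    unfolding AE_all_countable by blast
  then show ?thesis by eventually_elim (auto simp: inj_on_def)
qed

context
  assumes contX: "\<And>x. isCont (cdf (distr M borel X)) x" and contY: "\<And>y. isCont (cdf (distr M borel Y)) y"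
begin

abbreviation "grid_X m k \<equiv> quantile_grid (cdf (distr M borel X)) m k"
abbreviation "grid_Y m k \<equiv> quantile_grid (cdf (distr M borel Y)) m k"

lemma joint_prob_grid_step:
  assumes "1 \<le> m" "k < m"
  shows "joint_prob (grid_X m (Suc k) - grid_X m k) UNIV = 1 / real m"
    and "joint_prob UNIV (grid_Y m (Suc k) - grid_Y m k) = 1 / real m"
  using measure_quantile_grid_step[OF real_distribution_distr[OF X] contX assms]
    measure_quantile_grid_step[OF real_distribution_distr[OF Y] contY assms]
  by (simp_all add: joint_prob_eq_measure_distr)

lemma emp_prob_deviation_le_of_grid:
  assumes m: "1 \<le> m"
    and grid: "\<And>k l. k \<le> m \<Longrightarrow> l \<le> m \<Longrightarrow>
      \<bar>emp_prob n \<omega> (grid_X m k) (grid_Y m l) - joint_prob (grid_X m k) (grid_Y m l)\<bar> \<le> t"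
    and Sx: "lower_ray Sx" and Sy: "lower_ray Sy"
  shows "\<bar>emp_prob n \<omega> Sx Sy - joint_prob Sx Sy\<bar> \<le> t + 2 * (1 / real m)"
proof -
  obtain k where k: "k < m" "grid_X m k \<subseteq> Sx" "Sx \<subseteq> grid_X m (Suc k)"
    using lower_ray_quantile_grid_sandwich[OF real_distribution_distr[OF X] contX m Sx] by auto
  obtain l where l: "l < m" "grid_Y m l \<subseteq> Sy" "Sy \<subseteq> grid_Y m (Suc l)"
    using lower_ray_quantile_grid_sandwich[OF real_distribution_distr[OF Y] contY m Sy] by auto
  show ?thesis
    by (rule emp_prob_sandwich[OF k(2,3) l(2,3)])
      (use grid k l Sx Sy joint_prob_grid_step[OF m] in \<open>auto simp: lower_ray_borel\<close>)
qed

lemma prob_grid_deviation_le: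
  assumes n: "1 \<le> n" and t: "0 \<le> t"
  shows "prob (\<Union>p\<in>{..n} \<times> {..n}. {\<omega>\<in>space M.
      t \<le> \<bar>emp_prob n \<omega> (grid_X n (fst p)) (grid_Y n (snd p)) - joint_prob (grid_X n (fst p)) (grid_Y n (snd p))\<bar>})
    \<le> (real n + 1)\<^sup>2 * (2 * exp (-2 * real n * t\<^sup>2))"
proof -
  have "prob (\<Union>p\<in>{..n} \<times> {..n}. {\<omega>\<in>space M.
      t \<le> \<bar>emp_prob n \<omega> (grid_X n (fst p)) (grid_Y n (snd p)) - joint_prob (grid_X n (fst p)) (grid_Y n (snd p))\<bar>})
    \<le> (\<Sum>p\<in>{..n} \<times> {..n}. prob {\<omega>\<in>space M.
      t \<le> \<bar>emp_prob n \<omega> (grid_X n (fst p)) (grid_Y n (snd p)) - joint_prob (grid_X n (fst p)) (grid_Y n (snd p))\<bar>})"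
    by (rule finite_measure_subadditive_finite) (auto, measurable)
  also have "\<dots> \<le> (\<Sum>p\<in>{..n} \<times> {..n}. 2 * exp (-2 * real n * t\<^sup>2))"
    by (intro sum_mono prob_emp_prob_deviation_ge quantile_grid_borel n t)
  also have "\<dots> = (real n + 1)\<^sup>2 * (2 * exp (-2 * real n * t\<^sup>2))"
    by (simp add: card_cartesian_product power2_eq_square algebra_simps)
  finally show ?thesis .
qed

text \<open>The Hoeffding bounds of prob_grid_deviation_le are summable for s < 1/2, so by Borel--Cantelli
  almost surely only finitely many grids fail the bound.\<close>

lemma AE_eventually_grid_deviation_less:
  assumes s: "0 < s" "s < 1/2" and e: "e > 0"
  shows "AE \<omega> in M. \<forall>\<^sub>F n in sequentially. \<forall>k\<le>n. \<forall>l\<le>n.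
      \<bar>emp_prob n \<omega> (grid_X n k) (grid_Y n l) - joint_prob (grid_X n k) (grid_Y n l)\<bar> < e * real n powr (-s)"
proof -
  define B where "B n = (if n = 0 then {} else \<Union>p\<in>{..n} \<times> {..n}. {\<omega>\<in>space M. e * real n powr (-s)
      \<le> \<bar>emp_prob n \<omega> (grid_X n (fst p)) (grid_Y n (snd p)) - joint_prob (grid_X n (fst p)) (grid_Y n (snd p))\<bar>})"
    for n
  define b where "b n = (real n + 1)\<^sup>2 * (2 * exp (-2 * real n * (e * real n powr (-s))\<^sup>2))" for n :: nat
  have "{\<omega>\<in>space M. e * real n powr (-s) \<le> \<bar>emp_prob n \<omega> (grid_X n (fst p)) (grid_Y n (snd p))
      - joint_prob (grid_X n (fst p)) (grid_Y n (snd p))\<bar>} \<in> events" for n p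
    by measurable
  then have B: "B n \<in> events" for n unfolding B_def by auto
  have pB: "prob (B n) \<le> b n" for n
    using prob_grid_deviation_le[of n "e * real n powr (-s)"] e by (cases "n = 0") (auto simp: B_def b_def)
  have sb: "summable b"
  proof (rule summable_comparison_test_bigo)
    show "summable (\<lambda>n. norm (inverse (real n ^ 2)))" using inverse_power_summable[of 2, where 'a=real] by simp
    have "b \<in> O(\<lambda>n. 1 / real n ^ 2)" unfolding b_def using s e by real_asymp
    then show "b \<in> O(\<lambda>n. inverse (real n ^ 2))" by (simp add: inverse_eq_divide)
  qed
  have "summable (\<lambda>n. measure M (B n))"
    by (rule summable_comparison_test[OF _ sb]) (use pB in auto)
  then have "AE \<omega> in M. \<forall>\<^sub>F n in sequentially. \<omega> \<in> space M - B n"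
    by (intro borel_cantelli_AE1[OF B]) (auto simp: emeasure_eq_measure)
  then show ?thesis
  proof eventually_elim
    case (elim \<omega>)
    then show ?case using eventually_ge_at_top[of 1]
      by eventually_elim (auto simp: B_def not_le)
  qed
qed

lemma AE_emp_prob_rate_eps:
  assumes s: "0 < s" "s < 1/2" and e: "e > 0"
  shows "AE \<omega> in M. \<forall>\<^sub>F n in sequentially. \<forall>Sx Sy. lower_ray Sx \<longrightarrow> lower_ray Sy \<longrightarrow>
      \<bar>emp_prob n \<omega> Sx Sy - joint_prob Sx Sy\<bar> \<le> e * real n powr (-s)"
proof -
  have ev: "\<forall>\<^sub>F n in sequentially. e/2 * real n powr (-s) + 2 * (1 / real n) \<le> e * real n powr (-s)"
    using s e by real_asymp
  have "e/2 > 0" using e by simp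
  show ?thesis using AE_eventually_grid_deviation_less[OF s \<open>e/2 > 0\<close>]
  proof eventually_elim
    case (elim \<omega>)
    then show ?case using ev eventually_ge_at_top[of 1]
    proof eventually_elim
      case (elim n)
      then have "\<bar>emp_prob n \<omega> (grid_X n k) (grid_Y n l) - joint_prob (grid_X n k) (grid_Y n l)\<bar>
          \<le> e/2 * real n powr (-s)" if "k \<le> n" "l \<le> n" for k l
        using that by (auto intro: less_imp_le)
      then have "\<bar>emp_prob n \<omega> Sx Sy - joint_prob Sx Sy\<bar> \<le> e/2 * real n powr (-s) + 2 * (1 / real n)"
        if "lower_ray Sx" "lower_ray Sy" for Sx Sy
        using emp_prob_deviation_le_of_grid[OF elim(3) _ that] by blast
      then show ?case using elim(2) by fastforce
    qed
  qed
qed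

lemma AE_emp_prob_rate:
  assumes s: "0 < s" "s < 1/2"
  shows "AE \<omega> in M. \<forall>e>0. \<forall>\<^sub>F n in sequentially. \<forall>Sx Sy. lower_ray Sx \<longrightarrow> lower_ray Sy \<longrightarrow>
      real n powr s * \<bar>emp_prob n \<omega> Sx Sy - joint_prob Sx Sy\<bar> \<le> e"
proof -
  have "AE \<omega> in M. \<forall>j::nat. \<forall>\<^sub>F n in sequentially. \<forall>Sx Sy. lower_ray Sx \<longrightarrow> lower_ray Sy \<longrightarrow>
      \<bar>emp_prob n \<omega> Sx Sy - joint_prob Sx Sy\<bar> \<le> inverse (real (Suc j)) * real n powr (-s)"
    unfolding AE_all_countable by (intro allI AE_emp_prob_rate_eps s) simp
  then show ?thesis
  proof eventually_elim
    case (elim \<omega>)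
    show ?case
    proof (intro allI impI)
      fix e :: real assume "e > 0"
      then obtain j where j: "inverse (real (Suc j)) < e" using reals_Archimedean by blast
      show "\<forall>\<^sub>F n in sequentially. \<forall>Sx Sy. lower_ray Sx \<longrightarrow> lower_ray Sy \<longrightarrow>
          real n powr s * \<bar>emp_prob n \<omega> Sx Sy - joint_prob Sx Sy\<bar> \<le> e"
        using elim[rule_format, of j] eventually_ge_at_top[of 1]
      proof eventually_elim
        case (elim n)
        have "real n powr s * real n powr (-s) = 1" using elim(2) by (simp add: powr_add[symmetric])
        then have "real n powr s * (inverse (real (Suc j)) * real n powr (-s)) = inverse (real (Suc j))"
          by (simp add: ac_simps)

        show ?case
        proof (intro allI impI)
          fix Sx Sy assume "lower_ray Sx" "lower_ray Sy"
          then have "real n powr s * \<bar>emp_prob n \<omega> Sx Sy - joint_prob Sx Sy\<bar>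
              \<le> real n powr s * (inverse (real (Suc j)) * real n powr (-s))"
            using elim(1) by (intro mult_left_mono) auto
          then show "real n powr s * \<bar>emp_prob n \<omega> Sx Sy - joint_prob Sx Sy\<bar> \<le> e"
            using j \<open>real n powr s * (inverse (real (Suc j)) * real n powr (-s)) = inverse (real (Suc j))\<close>
            by linarith
        qed
      qed
    qed
  qed
qed

lemma AE_emp_df_rate:
  assumes s: "0 < s" "s < 1/2"
  shows "AE \<omega> in M. \<forall>e>0. \<forall>\<^sub>F n in sequentially.
    (\<forall>a b. real n powr s * \<bar>emp_joint Xs Ys n \<omega> a b - joint_prob {..a} {..b}\<bar> \<le> e) \<and>
    (\<forall>a. real n powr s * \<bar>emp_df Xs n \<omega> a - joint_prob {..a} UNIV\<bar> \<le> e) \<and>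
    (\<forall>b. real n powr s * \<bar>emp_df Ys n \<omega> b - joint_prob UNIV {..b}\<bar> \<le> e)"
  using AE_emp_prob_rate[OF s]
proof eventually_elim
  case (elim \<omega>)
  have "lower_ray {..a}" "lower_ray UNIV" for a :: real by (auto simp: lower_ray_def)
  moreover have "emp_joint Xs Ys n \<omega> a b = emp_prob n \<omega> {..a} {..b}"
    "emp_df Xs n \<omega> a = emp_prob n \<omega> {..a} UNIV" "emp_df Ys n \<omega> b = emp_prob n \<omega> UNIV {..b}" for n a b
    unfolding emp_joint_def emp_df_def emp_prob_def by simp_all
  ultimately show ?case using elim by (auto elim!: eventually_mono)
qed

end

end

section \<open>Almost sure convergence of the estimator\<close>

lemma markov_kernel_of_integral:
  assumes MK: "markov_kernel_of A K" and a: "a \<in> {0..1}" and w: "w \<in> {0..1}"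
  shows "A a w = (LINT t:{0..a}|lborel. K t {0..w})"
proof -
  obtain \<mu> where ds: "doubly_stochastic_measure_of A \<mu>"
    and eq: "\<And>E1 E2. E1 \<in> sets (restrict_space borel {0..1::real}) \<Longrightarrow> E2 \<in> sets (restrict_space borel {0..1::real}) \<Longrightarrow>
        (LINT x:E1|lborel. K x E2) = measure \<mu> (E1 \<times> E2)"
    using MK unfolding markov_kernel_of_def by blast
  have s: "{0..c} \<in> sets (restrict_space borel {0..1::real})" if "c \<in> {0..1}" for c
    using that by (subst sets_restrict_space_iff) auto
  have "(LINT t:{0..a}|lborel. K t {0..w}) = measure \<mu> ({0..a} \<times> {0..w})" by (rule eq[OF s[OF a] s[OF w]])
  also have "\<dots> = A a w" using ds a w unfolding doubly_stochastic_measure_of_def by auto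
  finally show ?thesis by simp
qed

lemma isCont_of_uniform_approximation:
  fixes f :: "real \<Rightarrow> real \<Rightarrow> real"
  assumes cont: "\<And>b. continuous_on UNIV (f b)" and bound: "\<And>b x. \<bar>f b x - g x\<bar> \<le> h b"
    and h: "(h \<longlongrightarrow> 0) at_top"
  shows "isCont g x"
proof -
  have "uniform_limit UNIV f g at_top"
    unfolding uniform_limit_iff
  proof (intro allI impI)
    fix e :: real assume "e > 0"
    then have "\<forall>\<^sub>F b in at_top. h b < e" using order_tendstoD(2)[OF h] by blast
    then show "\<forall>\<^sub>F b in at_top. \<forall>x\<in>UNIV. dist (f b x) (g x) < e"
      by eventually_elim (use bound in \<open>auto simp: dist_real_def intro: le_less_trans\<close>)
  qed
  then have "continuous_on UNIV g" using cont by (intro uniform_limit_theorem) auto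
  then show ?thesis by (simp add: continuous_on_eq_continuous_at)
qed

text \<open>Since the copula is 1-Lipschitz, F is the uniform limit of the sections H(-, b) as b tends
  to infinity, and likewise for G.\<close>

lemma isCont_margins_of_copula:
  fixes H :: "real \<Rightarrow> real \<Rightarrow> real"
  assumes Hc: "continuous_on UNIV (\<lambda>(a, b). H a b)" and C: "copula A" and HA: "\<And>a b. H a b = A (F a) (G b)"
    and F01: "\<And>a. F a \<in> {0..1}" and G01: "\<And>b. G b \<in> {0..1}"
    and Ftop: "(F \<longlongrightarrow> 1) at_top" and Gtop: "(G \<longlongrightarrow> 1) at_top"
  shows "isCont F a" and "isCont G b"
proof -
  have lip: "\<bar>A (F a) (G b) - A (F a) 1\<bar> \<le> \<bar>G b - 1\<bar>" "\<bar>A (F a) (G b) - A 1 (G b)\<bar> \<le> \<bar>F a - 1\<bar>" for a b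
    using copula_Lipschitz[OF C F01[of a] F01[of a] G01[of b], of 1]
      copula_Lipschitz[OF C F01[of a] _ G01[of b] G01[of b], of 1] by simp_all
  have bound: "\<bar>H a b - F a\<bar> \<le> 1 - G b" "\<bar>H a b - G b\<bar> \<le> 1 - F a" for a b
    using lip[of a b] F01[of a] G01[of b] copula_one_right[OF C F01[of a]] copula_one_left[OF C G01[of b]]
    by (simp_all add: HA)
  have lim: "((\<lambda>b. 1 - G b) \<longlongrightarrow> 0) at_top" "((\<lambda>a. 1 - F a) \<longlongrightarrow> 0) at_top"
    using tendsto_diff[OF tendsto_const Gtop, of 1] tendsto_diff[OF tendsto_const Ftop, of 1] by simp_all
  have Hc': "continuous_on (UNIV \<times> UNIV) (\<lambda>(a, b). H a b)" using Hc by simp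
  show "isCont F a"
    by (rule isCont_of_uniform_approximation[where f = "\<lambda>b a. H a b", OF _ bound(1) lim(1)])
      (use continuous_on_Pair_section[OF Hc'] in simp)
  show "isCont G b"
    by (rule isCont_of_uniform_approximation[where f = "\<lambda>a b. H a b", OF _ bound(2) lim(2)])
      (use continuous_on_Pair_section'[OF Hc'] in simp)
qed

lemma tendsto_of_powr_rate:
  fixes f :: "nat \<Rightarrow> real"
  assumes s: "0 \<le> s" and rate: "\<And>e. e > 0 \<Longrightarrow> \<forall>\<^sub>F n in sequentially. real n powr s * \<bar>f n - c\<bar> \<le> e"
  shows "f \<longlonglongrightarrow> c"
proof (rule tendstoI)
  fix e :: real assume "e > 0"
  then have "\<forall>\<^sub>F n in sequentially. real n powr s * \<bar>f n - c\<bar> \<le> e/2" by (intro rate) simp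
  then show "\<forall>\<^sub>F n in sequentially. dist (f n) c < e"
    using eventually_ge_at_top[of 1]
  proof eventually_elim
    case (elim n)
    have "1 \<le> real n powr s" using elim(2) s by (intro ge_one_powr_ge_zero) auto
    then have "\<bar>f n - c\<bar> \<le> real n powr s * \<bar>f n - c\<bar>" by (simp add: mult_le_cancel_right1)
    then show ?case using elim(1) \<open>e > 0\<close> by (simp add: dist_real_def)
  qed
qed

lemma checkerboard_size:
  assumes s: "0 < s"
  shows "\<And>n. 1 \<le> n \<Longrightarrow> 1 \<le> nat \<lfloor>real n powr s\<rfloor>"
    and "\<And>n. real (nat \<lfloor>real n powr s\<rfloor>) \<le> real n powr s"
    and "filterlim (\<lambda>n. nat \<lfloor>real n powr s\<rfloor>) at_top sequentially"
proof -
  show "1 \<le> nat \<lfloor>real n powr s\<rfloor>" if "1 \<le> n" for n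
  proof -
    have "1 \<le> real n powr s" using that s by (intro ge_one_powr_ge_zero) auto
    then show ?thesis by linarith
  qed
  show "real (nat \<lfloor>real n powr s\<rfloor>) \<le> real n powr s" for n
    by (simp add: of_nat_nat)
  have "filterlim (\<lambda>n::nat. real n powr s) at_top at_top" using s by real_asymp
  then show "filterlim (\<lambda>n. nat \<lfloor>real n powr s\<rfloor>) at_top sequentially"
    by (intro filterlim_compose[OF filterlim_nat_sequentially] filterlim_compose[OF filterlim_floor_sequentially])
qed

lemma emp_copula_rate:
  fixes Xs Ys :: "nat \<Rightarrow> 'a \<Rightarrow> real"
  assumes C: "copula A" and HA: "\<And>a b. H a b = A (F a) (G b)"
    and F01: "\<And>a. F a \<in> {0..1}" and G01: "\<And>b. G b \<in> {0..1}"
    and inj: "\<And>n. inj_on (\<lambda>i. Xs i \<omega>) {..<n}" "\<And>n. inj_on (\<lambda>i. Ys i \<omega>) {..<n}"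
    and s: "0 < s" "s < 1"
    and rate: "\<And>e. e > 0 \<Longrightarrow> \<forall>\<^sub>F n in sequentially.
      (\<forall>a b. real n powr s * \<bar>emp_joint Xs Ys n \<omega> a b - H a b\<bar> \<le> e) \<and>
      (\<forall>a. real n powr s * \<bar>emp_df Xs n \<omega> a - F a\<bar> \<le> e) \<and>
      (\<forall>b. real n powr s * \<bar>emp_df Ys n \<omega> b - G b\<bar> \<le> e)"
    and e: "e > 0"
  shows "\<forall>\<^sub>F n in sequentially. \<forall>a\<in>{0..1}. \<forall>b\<in>{0..1}.
    real (nat \<lfloor>real n powr s\<rfloor>) * \<bar>emp_copula Xs Ys n \<omega> a b - A a b\<bar> \<le> e"
proof -
  have "(\<lambda>n::nat. real n powr s * (2 / real n)) \<longlonglongrightarrow> 0" using s by real_asymp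
  then have "\<forall>\<^sub>F n in sequentially. real n powr s * (2 / real n) < e / 2"
    using e by (auto dest: order_tendstoD(2)[of _ 0 _ "e / 2"])
  moreover have "\<forall>\<^sub>F n in sequentially.
      (\<forall>a b. real n powr s * \<bar>emp_joint Xs Ys n \<omega> a b - H a b\<bar> \<le> e/6) \<and>
      (\<forall>a. real n powr s * \<bar>emp_df Xs n \<omega> a - F a\<bar> \<le> e/6) \<and>
      (\<forall>b. real n powr s * \<bar>emp_df Ys n \<omega> b - G b\<bar> \<le> e/6)"
    using e by (intro rate) simp
  ultimately show ?thesis using eventually_ge_at_top[of 1]
  proof eventually_elim
    case (elim n)
    define \<delta> where "\<delta> = e / 6 / real n powr s"
    have pos: "real n powr s > 0" using elim(3) by simp
    have dev: "\<bar>d\<bar> \<le> \<delta>" if "real n powr s * \<bar>d\<bar> \<le> e / 6" for d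
      using that pos by (simp add: \<delta>_def field_simps)
    have dH: "\<bar>emp_joint Xs Ys n \<omega> x y - H x y\<bar> \<le> \<delta>" for x y using elim(2) dev by simp
    have dF: "\<bar>emp_df Xs n \<omega> x - F x\<bar> \<le> \<delta>" for x using elim(2) dev by simp
    have dG: "\<bar>emp_df Ys n \<omega> y - G y\<bar> \<le> \<delta>" for y using elim(2) dev by simp
    show ?case
    proof (intro ballI)
      fix a b :: real assume "a \<in> {0..1}" "b \<in> {0..1}"
      then have "\<bar>emp_copula Xs Ys n \<omega> a b - A a b\<bar> \<le> 3 * \<delta> + 2 / real n"
        by (rule emp_copula_near[where Xs = Xs and Ys = Ys and \<omega> = \<omega> and n = n,
              OF C inj(1) inj(2) elim(3) HA F01 G01 dH dF dG])
      then have "real (nat \<lfloor>real n powr s\<rfloor>) * \<bar>emp_copula Xs Ys n \<omega> a b - A a b\<bar> \<le> real n powr s * (3 * \<delta> + 2 / real n)"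
        using checkerboard_size(2)[OF s(1)] by (intro mult_mono) auto
      also have "\<dots> = e / 2 + real n powr s * (2 / real n)"
        using pos by (simp add: \<delta>_def field_simps)
      finally show "real (nat \<lfloor>real n powr s\<rfloor>) * \<bar>emp_copula Xs Ys n \<omega> a b - A a b\<bar> \<le> e"
        using elim(1) by linarith
    qed
  qed
qed

lemma emp_checkerboard_mean_tendsto:
  fixes Xs Ys :: "nat \<Rightarrow> 'a \<Rightarrow> real"
  assumes C: "copula A" and HA: "\<And>a b. H a b = A (F a) (G b)"
    and F01: "\<And>a. F a \<in> {0..1}" and G01: "\<And>b. G b \<in> {0..1}" and contG: "\<And>b. isCont G b"
    and MK: "markov_kernel_of A K" and Kc: "continuous_on ({0..1} \<times> {0..1}) (\<lambda>(u, v). K u {0..v})"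
    and inj: "\<And>n. inj_on (\<lambda>i. Xs i \<omega>) {..<n}" "\<And>n. inj_on (\<lambda>i. Ys i \<omega>) {..<n}"
    and s: "0 < s" "s < 1"
    and rate: "\<And>e. e > 0 \<Longrightarrow> \<forall>\<^sub>F n in sequentially.
      (\<forall>a b. real n powr s * \<bar>emp_joint Xs Ys n \<omega> a b - H a b\<bar> \<le> e) \<and>
      (\<forall>a. real n powr s * \<bar>emp_df Xs n \<omega> a - F a\<bar> \<le> e) \<and>
      (\<forall>b. real n powr s * \<bar>emp_df Ys n \<omega> b - G b\<bar> \<le> e)"
    and UI: "unif_integrable_dists (\<lambda>n. interval_measure (\<lambda>y.
      cb_kernel_cdf (nat \<lfloor>real n powr s\<rfloor>) (emp_copula Xs Ys n \<omega>) (emp_df Xs n \<omega> x) (emp_df Ys n \<omega> y)))"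
  shows "(\<lambda>n. (LINT y:{0<..}|lborel. 1 - cb_kernel_cdf (nat \<lfloor>real n powr s\<rfloor>) (emp_copula Xs Ys n \<omega>)
                                       (emp_df Xs n \<omega> x) (emp_df Ys n \<omega> y))
       - (LINT y:{..<0}|lborel. cb_kernel_cdf (nat \<lfloor>real n powr s\<rfloor>) (emp_copula Xs Ys n \<omega>)
                                       (emp_df Xs n \<omega> x) (emp_df Ys n \<omega> y)))
    \<longlonglongrightarrow> (\<integral>y. y \<partial>(interval_measure (\<lambda>y. K (F x) {0..G y})))"
proof (rule mean_tendsto_of_cdf_tendsto_eventually[OF _ _ _ UI])
  show "\<forall>\<^sub>F n in sequentially. distribution_function (\<lambda>y.
      cb_kernel_cdf (nat \<lfloor>real n powr s\<rfloor>) (emp_copula Xs Ys n \<omega>) (emp_df Xs n \<omega> x) (emp_df Ys n \<omega> y))"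
    using eventually_ge_at_top[of 1]
    by eventually_elim (use inj checkerboard_size(1)[OF s(1)] emp_df_bounds in
        \<open>auto intro!: distribution_function_emp_cb_kernel_cdf\<close>)
  have kc: "continuous_on ({0..1} \<times> {0..1}) (\<lambda>(t, w). K t {0..w})" using Kc by simp
  show "(\<lambda>n. cb_kernel_cdf (nat \<lfloor>real n powr s\<rfloor>) (emp_copula Xs Ys n \<omega>) (emp_df Xs n \<omega> x) (emp_df Ys n \<omega> y))
      \<longlonglongrightarrow> K (F x) {0..G y}" for y
  proof (rule cb_kernel_cdf_tendsto[where k = "\<lambda>t w. K t {0..w}", OF _ kc _ checkerboard_size(3)[OF s(1)]])
    show "A a w = (LINT t:{0..a}|lborel. K t {0..w})" if "a \<in> {0..1}" "w \<in> {0..1}" for a w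
      using markov_kernel_of_integral[OF MK that] .
    show "(\<lambda>n. emp_df Xs n \<omega> x) \<longlonglongrightarrow> F x"
    proof (rule tendsto_of_powr_rate)
      show "\<forall>\<^sub>F n in sequentially. real n powr s * \<bar>emp_df Xs n \<omega> x - F x\<bar> \<le> e" if "e > 0" for e
        using rate[OF that] by eventually_elim simp
    qed (use s in simp)
    show "(\<lambda>n. emp_df Ys n \<omega> y) \<longlonglongrightarrow> G y"
    proof (rule tendsto_of_powr_rate)
      show "\<forall>\<^sub>F n in sequentially. real n powr s * \<bar>emp_df Ys n \<omega> y - G y\<bar> \<le> e" if "e > 0" for e
        using rate[OF that] by eventually_elim simp
    qed (use s in simp)
    show "\<forall>\<^sub>F n in sequentially. \<forall>a\<in>{0..1}. \<forall>b\<in>{0..1}.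
        real (nat \<lfloor>real n powr s\<rfloor>) * \<bar>emp_copula Xs Ys n \<omega> a b - A a b\<bar> \<le> e" if "e > 0" for e
      by (rule emp_copula_rate[OF C HA F01 G01 inj s rate that])
  qed (use copula_zero_right[OF C] emp_df_bounds in auto)
  show "continuous (at_right a) (\<lambda>y. K (F x) {0..G y})" for a
  proof -
    have "continuous_on {0..1} (\<lambda>v. K (F x) {0..v})"
      using continuous_on_Pair_section'[OF kc F01] .
    moreover have "(G \<longlongrightarrow> G a) (at a)" using contG[of a] by (simp add: isCont_def)
    ultimately have "((\<lambda>y. K (F x) {0..G y}) \<longlongrightarrow> K (F x) {0..G a}) (at a)"
      by (rule continuous_on_tendsto_compose) (use G01 in auto)
    then have "isCont (\<lambda>y. K (F x) {0..G y}) a" by (simp add: isCont_def)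
    then show ?thesis by (rule continuous_at_imp_continuous_at_within)
  qed
qed

theorem theorem5p3:
  fixes M :: "'a measure"
    and X Y :: "'a \<Rightarrow> real"
    and Xs Ys :: "nat \<Rightarrow> 'a \<Rightarrow> real"
    and H :: "real \<Rightarrow> real \<Rightarrow> real"
    and F G :: "real \<Rightarrow> real"
    and A :: "real \<Rightarrow> real \<Rightarrow> real"
    and K :: "real \<Rightarrow> real set \<Rightarrow> real"
    and s x :: real
  assumes "prob_space M"
    and "X \<in> borel_measurable M" and "Y \<in> borel_measurable M"
    and "\<And>i. Xs i \<in> borel_measurable M" and "\<And>i. Ys i \<in> borel_measurable M"
    and "prob_space.indep_vars M (\<lambda>_. borel) (\<lambda>i \<omega>. (Xs i \<omega>, Ys i \<omega>)) UNIV"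
    and "\<And>i. distr M borel (\<lambda>\<omega>. (Xs i \<omega>, Ys i \<omega>)) = distr M borel (\<lambda>\<omega>. (X \<omega>, Y \<omega>))"
    and "\<And>a b. H a b = measure M {\<omega>\<in>space M. X \<omega> \<le> a \<and> Y \<omega> \<le> b}"
    and "\<And>a. F a = measure M {\<omega>\<in>space M. X \<omega> \<le> a}"
    and "\<And>b. G b = measure M {\<omega>\<in>space M. Y \<omega> \<le> b}"
    and "continuous_on UNIV (\<lambda>(a, b). H a b)"
    and "copula A" and "\<And>a b. H a b = A (F a) (G b)"
    and "markov_kernel_of A K"
    and "continuous_on ({0..1} \<times> {0..1}) (\<lambda>(u, v). K u {0..v})"
    and "0 < s" and "s < 1 / 2"
    and "AE \<omega> in M. unif_integrable_dists (\<lambda>n. interval_measure (\<lambda>y.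
            cb_kernel_cdf (nat \<lfloor>real n powr s\<rfloor>) (emp_copula Xs Ys n \<omega>)
              (emp_df Xs n \<omega> x) (emp_df Ys n \<omega> y)))"
  shows "AE \<omega> in M.
           (\<lambda>n. (LINT y:{0<..}|lborel. 1 - cb_kernel_cdf (nat \<lfloor>real n powr s\<rfloor>) (emp_copula Xs Ys n \<omega>)
                                              (emp_df Xs n \<omega> x) (emp_df Ys n \<omega> y))
              - (LINT y:{..<0}|lborel. cb_kernel_cdf (nat \<lfloor>real n powr s\<rfloor>) (emp_copula Xs Ys n \<omega>)
                                              (emp_df Xs n \<omega> x) (emp_df Ys n \<omega> y)))
           \<longlonglongrightarrow> (\<integral>y. y \<partial>(interval_measure (\<lambda>y. K (F x) {0..G y})))"
proof -
  interpret iid_pairs M X Y Xs Ys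
    by (intro iid_pairs.intro[OF assms(1)] iid_pairs_axioms.intro assms(2-7))
  have joint: "H a b = joint_prob {..a} {..b}" "F a = joint_prob {..a} UNIV" "G b = joint_prob UNIV {..b}"
    for a b unfolding joint_prob_def assms(8-10) by simp_all
  have cdf: "cdf (distr M borel X) = F" "cdf (distr M borel Y) = G"
    by (simp_all add: fun_eq_iff cdf_def joint joint_prob_eq_measure_distr)
  have F01: "F a \<in> {0..1}" and G01: "G b \<in> {0..1}" for a b
    unfolding assms(9,10) by simp_all
  have cont: "isCont F a" "isCont G b" for a b
    using isCont_margins_of_copula[OF assms(11,12,13) F01 G01] real_distribution.cdf_lim_at_top_prob
    unfolding cdf[symmetric] by auto
  have "AE \<omega> in M. \<forall>n. inj_on (\<lambda>i. Xs i \<omega>) {..<n} \<and> inj_on (\<lambda>i. Ys i \<omega>) {..<n}"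
    by (rule AE_distinct_samples) (simp_all add: cdf cont)
  moreover have "AE \<omega> in M. \<forall>e>0. \<forall>\<^sub>F n in sequentially.
    (\<forall>a b. real n powr s * \<bar>emp_joint Xs Ys n \<omega> a b - H a b\<bar> \<le> e) \<and>
    (\<forall>a. real n powr s * \<bar>emp_df Xs n \<omega> a - F a\<bar> \<le> e) \<and>
    (\<forall>b. real n powr s * \<bar>emp_df Ys n \<omega> b - G b\<bar> \<le> e)"
    unfolding joint using AE_emp_df_rate assms(16,17) by (simp add: cdf cont)
  ultimately show ?thesis using assms(18)
    by eventually_elim (rule emp_checkerboard_mean_tendsto[OF assms(12,13) F01 G01 cont(2) assms(14,15)];
        use assms(16,17) in auto)
qed

end
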